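(* If $\sigma_2(G)\le\sigma_2(H)$, then for every integer $0\le i\le s-1$, $$\sigma_2\big((I\otimes A_H)\,G_i\,(I\otimes A_H)\big)\le 2\,\sigma_2(H).$$
   Context: $G$ is a $d_1$-regular undirected graph on $[n]$ with normalized adjacency matrix $A_G$ and a locally invertible rotation map $\mathrm{rot}_G$ ($\mathrm{rot}_G(v,j)=(v',j')$ iff $v'$ is the $j$-th neighbour of $v$ and $v$ is the $j'$-th neighbour of $v'$, with $j'=\varphi(j)$ for a fixed bijection $\varphi$ of $[d_1]$). $H$ is a $d_2$-regular undirected graph on $[d_1]^s$ with normalized adjacency matrix $A_H$. $\mathrm{Rot}_i$ sends $(v,(a_0,\dots,a_{s-1}))$ to $(v',(a_0,\dots,a_i',\dots,a_{s-1}))$ where $(v',a_i')=\mathrm{rot}_G(v,a_i)$, and $G_i$ is its permutation matrix on $\mathbb R^{V(G)}\otimes\mathbb R^{V(H)}$. $\sigma_2$ denotes the second largest singular value; $\sigma_2(G)=\sigma_2(A_G)$, $\sigma_2(H)=\sigma_2(A_H)$. *)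

theory Defs
  imports "Jordan_Normal_Form.Char_Poly" "HOL-Library.Multiset"
begin

text \<open>A real square matrix with rows and columns indexed by the finite set S is a
function M :: 'a => 'a => real (only the values on S x S matter).\<close>

definition mat_mult_on :: "'a set \<Rightarrow> ('a \<Rightarrow> 'a \<Rightarrow> real) \<Rightarrow> ('a \<Rightarrow> 'a \<Rightarrow> real) \<Rightarrow> ('a \<Rightarrow> 'a \<Rightarrow> real)" where
  "mat_mult_on S M N = (\<lambda>x y. \<Sum>z\<in>S. M x z * N z y)"

text \<open>An (arbitrary) enumeration of S by 0..card S - 1, used to view M as a JNF matrix.
Spectral data do not depend on the chosen enumeration.\<close>
definition enum_on :: "'a set \<Rightarrow> nat \<Rightarrow> 'a" where
  "enum_on S = (SOME f. bij_betw f {..<card S} S)"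

definition to_mat :: "'a set \<Rightarrow> ('a \<Rightarrow> 'a \<Rightarrow> real) \<Rightarrow> real mat" where
  "to_mat S M = mat (card S) (card S) (\<lambda>(i,j). M (enum_on S i) (enum_on S j))"

definition singular_values :: "'a set \<Rightarrow> ('a \<Rightarrow> 'a \<Rightarrow> real) \<Rightarrow> real list" where
  "singular_values S M =
     (let A = to_mat S M in
      rev (sorted_list_of_multiset (image_mset sqrt (proots (char_poly (transpose_mat A * A))))))"

text \<open>Second largest singular value (0 by convention if there are fewer than two).\<close>
definition sigma2 :: "'a set \<Rightarrow> ('a \<Rightarrow> 'a \<Rightarrow> real) \<Rightarrow> real" where
  "sigma2 S M = (if length (singular_values S M) \<ge> 2 then singular_values S M ! 1 else 0)"

text \<open>A d-regular undirected (multi)graph on vertex set V given by its rotation map: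
rot v j = (w, k) means w is the j-th neighbour of v and v is the k-th neighbour of w.\<close>
definition is_rotation_map :: "'v set \<Rightarrow> nat \<Rightarrow> ('v \<Rightarrow> nat \<Rightarrow> 'v \<times> nat) \<Rightarrow> bool" where
  "is_rotation_map V d rot \<longleftrightarrow>
     (\<forall>v\<in>V. \<forall>j<d. fst (rot v j) \<in> V \<and> snd (rot v j) < d \<and>
                   rot (fst (rot v j)) (snd (rot v j)) = (v, j))"

definition locally_invertible :: "'v set \<Rightarrow> nat \<Rightarrow> ('v \<Rightarrow> nat \<Rightarrow> 'v \<times> nat) \<Rightarrow> bool" where
  "locally_invertible V d rot \<longleftrightarrow>
     (\<exists>\<phi>. bij_betw \<phi> {..<d} {..<d} \<and> (\<forall>v\<in>V. \<forall>j<d. snd (rot v j) = \<phi> j))"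

definition norm_adj :: "nat \<Rightarrow> ('v \<Rightarrow> nat \<Rightarrow> 'v \<times> nat) \<Rightarrow> 'v \<Rightarrow> 'v \<Rightarrow> real" where
  "norm_adj d rot = (\<lambda>u v. real (card {j. j < d \<and> fst (rot v j) = u}) / real d)"

text \<open>Vertex set of H: [d1]^s, tuples (a_0,...,a_{s-1}) as lists.\<close>
definition tuples :: "nat \<Rightarrow> nat \<Rightarrow> nat list set" where
  "tuples d1 s = {a. length a = s \<and> set a \<subseteq> {..<d1}}"

definition Rot_i :: "(nat \<Rightarrow> nat \<Rightarrow> nat \<times> nat) \<Rightarrow> nat \<Rightarrow> nat \<times> nat list \<Rightarrow> nat \<times> nat list" where
  "Rot_i rotG i = (\<lambda>(v, a). let (v', ai') = rotG v (a ! i) in (v', a[i := ai']))"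

definition perm_mat_Rot :: "(nat \<Rightarrow> nat \<Rightarrow> nat \<times> nat) \<Rightarrow> nat \<Rightarrow> (nat \<times> nat list) \<Rightarrow> (nat \<times> nat list) \<Rightarrow> real" where
  "perm_mat_Rot rotG i = (\<lambda>x y. if x = Rot_i rotG i y then 1 else 0)"

definition id_tensor :: "('h \<Rightarrow> 'h \<Rightarrow> real) \<Rightarrow> ('v \<times> 'h) \<Rightarrow> ('v \<times> 'h) \<Rightarrow> real" where
  "id_tensor A = (\<lambda>(v, a) (w, b). (if v = w then 1 else 0) * A a b)"

end

(*
  Write M = (I (x) A_H) G_i (I (x) A_H) and let x be orthogonal to the constant vector. Split
  x = x1 + x2, where x1(v, a) = y v is the mean of x over the slice {v} x [d1]^s and x2 has mean
  zero on every slice. On x2 the first factor I (x) A_H already shrinks the norm by sigma2(H), and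
  the two remaining factors are contractions. On x1 the first factor acts as the identity; G_i moves
  the edge label a_i into the G-coordinate, and since a_i is uniformly distributed the slice means
  of G_i x1 are one step A_G y of the walk on G, shrunk by sigma2(G) <= sigma2(H), while the last
  factor shrinks the deviation from these means by sigma2(H). Hence |M x|^2 <= 4 sigma2(H)^2 |x|^2
  on the complement of the constants, and the variational characterization of the second singular
  value (obtained from the spectral theorem for the real symmetric matrix M^T M) gives
  sigma2(M) <= 2 sigma2(H).
*)

theory Submission
  imports Defs
begin

definition dot_on :: "'a set \<Rightarrow> ('a \<Rightarrow> real) \<Rightarrow> ('a \<Rightarrow> real) \<Rightarrow> real" where
  "dot_on S x y = (\<Sum>a\<in>S. x a * y a)"

definition mat_vec_on :: "'a set \<Rightarrow> ('a \<Rightarrow> 'a \<Rightarrow> real) \<Rightarrow> ('a \<Rightarrow> real) \<Rightarrow> 'a \<Rightarrow> real" where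
  "mat_vec_on S M x = (\<lambda>a. \<Sum>b\<in>S. M a b * x b)"

definition symmetric_on :: "'a set \<Rightarrow> ('a \<Rightarrow> 'a \<Rightarrow> real) \<Rightarrow> bool" where
  "symmetric_on S C \<longleftrightarrow> (\<forall>a\<in>S. \<forall>b\<in>S. C a b = C b a)"

lemma dot_on_commute: "dot_on S x y = dot_on S y x"
  unfolding dot_on_def by (simp add: mult.commute)

lemma dot_on_cong:
  "(\<And>a. a \<in> S \<Longrightarrow> x a = x' a) \<Longrightarrow> (\<And>a. a \<in> S \<Longrightarrow> y a = y' a) \<Longrightarrow> dot_on S x y = dot_on S x' y'"
  unfolding dot_on_def by (intro sum.cong) auto

lemma dot_on_sum_left:
  "dot_on S (\<lambda>a. \<Sum>b\<in>B. f b * g b a) y = (\<Sum>b\<in>B. f b * dot_on S (g b) y)"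
  unfolding dot_on_def by (simp add: sum_distrib_left sum_distrib_right mult.assoc sum.swap[of _ B])

lemma dot_on_sum_right:
  "dot_on S y (\<lambda>a. \<Sum>b\<in>B. f b * g b a) = (\<Sum>b\<in>B. f b * dot_on S y (g b))"
  using dot_on_sum_left[of S f g B y] by (simp add: dot_on_commute)

lemma dot_on_scale_right: "dot_on S x (\<lambda>a. c * y a) = c * dot_on S x y"
  unfolding dot_on_def by (simp add: sum_distrib_left algebra_simps)

lemma dot_on_self_nonneg: "0 \<le> dot_on S x x"
  unfolding dot_on_def by (intro sum_nonneg) auto

lemma dot_on_self_pos:
  assumes "finite S" "a \<in> S" "x a \<noteq> 0"
  shows "0 < dot_on S x x"
proof -
  have "x a * x a \<le> dot_on S x x"
    unfolding dot_on_def by (rule member_le_sum) (use assms in auto)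
  moreover have "0 < x a * x a" using assms(3) not_real_square_gt_zero by blast
  ultimately show ?thesis by linarith
qed

lemma dot_on_Times: "dot_on (A \<times> B) x y = (\<Sum>a\<in>A. dot_on B (\<lambda>b. x (a, b)) (\<lambda>b. y (a, b)))"
  unfolding dot_on_def by (simp add: sum.cartesian_product)

lemma dot_on_add_self_le:
  "dot_on S (\<lambda>a. x a + y a) (\<lambda>a. x a + y a) \<le> 2 * dot_on S x x + 2 * dot_on S y y"
proof -
  have "(x a + y a) * (x a + y a) \<le> 2 * (x a * x a) + 2 * (y a * y a)" for a
  proof -
    have "0 \<le> (x a - y a)^2" by simp
    thus ?thesis by (simp add: power2_eq_square algebra_simps)
  qed
  hence "dot_on S (\<lambda>a. x a + y a) (\<lambda>a. x a + y a) \<le> (\<Sum>a\<in>S. 2 * (x a * x a) + 2 * (y a * y a))"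
    unfolding dot_on_def by (intro sum_mono) auto
  thus ?thesis unfolding dot_on_def by (simp add: sum.distrib sum_distrib_left)
qed

lemma mat_vec_on_cong: "(\<And>a. a \<in> S \<Longrightarrow> x a = x' a) \<Longrightarrow> mat_vec_on S M x = mat_vec_on S M x'"
  unfolding mat_vec_on_def by (intro ext sum.cong) auto

lemma mat_vec_on_sum:
  "mat_vec_on S C (\<lambda>a. \<Sum>b\<in>B. f b * g b a) = (\<lambda>a. \<Sum>b\<in>B. f b * mat_vec_on S C (g b) a)"
  unfolding mat_vec_on_def by (auto simp add: sum_distrib_left algebra_simps intro!: ext sum.swap)

lemma mat_vec_on_add:
  "mat_vec_on S M (\<lambda>a. x a + y a) = (\<lambda>a. mat_vec_on S M x a + mat_vec_on S M y a)"
  unfolding mat_vec_on_def by (auto simp: algebra_simps sum.distrib intro!: ext)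

lemma mat_vec_on_mat_mult_on:
  "mat_vec_on S (mat_mult_on S A B) x = mat_vec_on S A (mat_vec_on S B x)"
  unfolding mat_vec_on_def mat_mult_on_def
  by (auto simp: sum_distrib_left sum_distrib_right mult.assoc intro!: ext sum.swap)

lemma dot_on_mat_vec_symmetric:
  assumes "symmetric_on S C"
  shows "dot_on S y (mat_vec_on S C z) = dot_on S z (mat_vec_on S C y)"
proof -
  have "dot_on S y (mat_vec_on S C z) = (\<Sum>a\<in>S. \<Sum>b\<in>S. y a * C a b * z b)"
    unfolding dot_on_def mat_vec_on_def by (simp add: sum_distrib_left mult.assoc)
  also have "\<dots> = (\<Sum>b\<in>S. \<Sum>a\<in>S. z b * C b a * y a)"
    using assms unfolding symmetric_on_def by (subst sum.swap) (auto intro!: sum.cong)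
  also have "\<dots> = dot_on S z (mat_vec_on S C y)"
    unfolding dot_on_def mat_vec_on_def by (simp add: sum_distrib_left mult.assoc)
  finally show ?thesis .
qed

section \<open>The spectral theorem for real symmetric matrices\<close>

lemma real_matrix_complex_eigenvector:
  fixes C :: "nat \<Rightarrow> nat \<Rightarrow> real"
  assumes "0 < n"
  shows "\<exists>(z :: complex) x. (\<forall>i<n. (\<Sum>j<n. of_real (C i j) * x j) = z * x i) \<and> (\<exists>i<n. x i \<noteq> 0)"
proof -
  define A where "A = mat n n (\<lambda>(i,j). complex_of_real (C i j))"
  have A: "A \<in> carrier_mat n n" unfolding A_def by simp
  have "degree (char_poly A) = n" using degree_monic_char_poly[OF A] by simp
  hence "\<not> constant (poly (char_poly A))" using assms constant_degree[of "char_poly A"] by auto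
  then obtain z where "poly (char_poly A) z = 0" using fundamental_theorem_of_algebra by blast
  hence "eigenvalue A z" using eigenvalue_root_char_poly[OF A] by simp
  then obtain v where v: "v \<in> carrier_vec n" "v \<noteq> 0\<^sub>v n" "A *\<^sub>v v = z \<cdot>\<^sub>v v"
    unfolding eigenvalue_def eigenvector_def using A by auto
  have "(\<Sum>j<n. of_real (C i j) * v $ j) = z * v $ i" if i: "i < n" for i
  proof -
    have "(A *\<^sub>v v) $ i = (z \<cdot>\<^sub>v v) $ i" using v(3) by simp
    thus ?thesis using i v(1) unfolding A_def by (simp add: scalar_prod_def row_def atLeast0LessThan)
  qed
  moreover have "\<exists>i<n. v $ i \<noteq> 0"
  proof (rule ccontr)
    assume "\<not> ?thesis"
    hence "v = 0\<^sub>v n" using v(1) by (intro eq_vecI) auto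
    thus False using v(2) by simp
  qed
  ultimately show ?thesis by blast
qed

lemma symmetric_complex_eigenvalue_real:
  fixes n :: nat and C :: "nat \<Rightarrow> nat \<Rightarrow> real"
  assumes sym: "symmetric_on {..<n} C"
    and ev: "\<And>i. i < n \<Longrightarrow> (\<Sum>j<n. of_real (C i j) * x j) = z * x i"
    and nz: "\<exists>i<n. x i \<noteq> 0"
  shows "Im z = 0"
proof -
  define q where "q = (\<Sum>i<n. cnj (x i) * (\<Sum>j<n. complex_of_real (C i j) * x j))"
  define r where "r = (\<Sum>i<n. (cmod (x i))^2)"
  have "r > 0"
  proof -
    obtain i where i: "i < n" "x i \<noteq> 0" using nz by blast
    have "(cmod (x i))^2 \<le> r" unfolding r_def
      by (rule member_le_sum[of i "{..<n}" "\<lambda>i. (cmod (x i))^2"]) (use i in auto)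
    moreover have "(cmod (x i))^2 > 0" using i by simp
    ultimately show ?thesis by linarith
  qed
  have "q = z * complex_of_real r"
  proof -
    have "q = (\<Sum>i<n. cnj (x i) * (z * x i))" unfolding q_def using ev by (intro sum.cong) auto
    also have "\<dots> = z * (\<Sum>i<n. complex_of_real ((cmod (x i))^2))"
      by (simp add: sum_distrib_left algebra_simps complex_norm_square[symmetric])
    finally show ?thesis unfolding r_def by (simp add: of_real_sum)
  qed
  moreover have "cnj q = q"
  proof -
    have "cnj q = (\<Sum>i<n. \<Sum>j<n. complex_of_real (C i j) * x i * cnj (x j))"
      unfolding q_def by (simp add: sum_distrib_left algebra_simps)
    also have "\<dots> = (\<Sum>j<n. \<Sum>i<n. complex_of_real (C j i) * x i * cnj (x j))"
      using sym unfolding symmetric_on_def by (subst sum.swap) (auto intro!: sum.cong)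
    also have "\<dots> = q" unfolding q_def by (simp add: sum_distrib_left algebra_simps)
    finally show ?thesis .
  qed
  ultimately have "Im z * r = 0" using arg_cong[of "cnj q" q Im] by simp
  thus ?thesis using \<open>r > 0\<close> by simp
qed

lemma symmetric_real_eigenvector_exists:
  fixes n :: nat
  assumes "0 < n" and sym: "symmetric_on {..<n} C"
  obtains \<mu> x where "\<And>i. i < n \<Longrightarrow> mat_vec_on {..<n} C x i = \<mu> * x i" and "\<exists>i<n. x i \<noteq> 0"
proof -
  obtain z :: complex and x where ev: "\<And>i. i < n \<Longrightarrow> (\<Sum>j<n. of_real (C i j) * x j) = z * x i"
    and nz: "\<exists>i<n. x i \<noteq> 0"
    using real_matrix_complex_eigenvector[OF \<open>0 < n\<close>, of C] by blast
  have "Im z = 0" by (rule symmetric_complex_eigenvalue_real[OF sym ev nz])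
  \<comment> \<open>Real and imaginary part of the eigenvector are real eigenvectors; one of them is nonzero.\<close>
  have "mat_vec_on {..<n} C (\<lambda>j. Re (x j)) i = Re z * Re (x i)"
    and "mat_vec_on {..<n} C (\<lambda>j. Im (x j)) i = Re z * Im (x i)" if i: "i < n" for i
  proof -
    have "Re (\<Sum>j<n. of_real (C i j) * x j) = Re (z * x i)"
      and "Im (\<Sum>j<n. of_real (C i j) * x j) = Im (z * x i)" using ev[OF i] by simp_all
    thus "mat_vec_on {..<n} C (\<lambda>j. Re (x j)) i = Re z * Re (x i)"
      and "mat_vec_on {..<n} C (\<lambda>j. Im (x j)) i = Re z * Im (x i)"
      using \<open>Im z = 0\<close> by (simp_all add: mat_vec_on_def Re_sum Im_sum)
  qed
  moreover have "(\<exists>i<n. Re (x i) \<noteq> 0) \<or> (\<exists>i<n. Im (x i) \<noteq> 0)"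
    using nz by (auto simp: complex_eq_iff)
  ultimately show ?thesis
    using that[of "\<lambda>j. Re (x j)" "Re z"] that[of "\<lambda>j. Im (x j)" "Re z"] by blast
qed

definition orthonormal_upto :: "nat \<Rightarrow> (nat \<Rightarrow> nat \<Rightarrow> real) \<Rightarrow> bool" where
  "orthonormal_upto n V \<longleftrightarrow>
     (\<forall>k<n. \<forall>l<n. dot_on {..<n} (V k) (V l) = (if k = l then 1 else 0))"

definition eigenbasis ::
    "nat \<Rightarrow> (nat \<Rightarrow> nat \<Rightarrow> real) \<Rightarrow> (nat \<Rightarrow> nat \<Rightarrow> real) \<Rightarrow> (nat \<Rightarrow> real) \<Rightarrow> bool" where
  "eigenbasis n C V \<mu> \<longleftrightarrow>
     orthonormal_upto n V \<and> (\<forall>k<n. \<forall>i<n. mat_vec_on {..<n} C (V k) i = \<mu> k * V k i)"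

lemma eigenbasisD:
  assumes "eigenbasis n C V \<mu>"
  shows "orthonormal_upto n V"
    and "k < n \<Longrightarrow> i < n \<Longrightarrow> mat_vec_on {..<n} C (V k) i = \<mu> k * V k i"
  using assms unfolding eigenbasis_def by blast+

lemma orthonormal_uptoD:
  "orthonormal_upto n V \<Longrightarrow> k < n \<Longrightarrow> l < n \<Longrightarrow> dot_on {..<n} (V k) (V l) = (if k = l then 1 else 0)"
  unfolding orthonormal_upto_def by blast

lemma sum_lessThan_indicator: "k < (n :: nat) \<Longrightarrow> (\<Sum>i<n. f i * (if i = k then 1 else 0)) = (f k :: real)"
proof -
  assume "k < n"
  have "(\<Sum>i<n. f i * (if i = k then 1 else 0)) = (\<Sum>i<n. if i = k then f i else 0)"
    by (intro sum.cong) auto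
  thus ?thesis using \<open>k < n\<close> by (simp add: sum.delta)
qed

lemma unit_vector_orthonormal_completion:
  fixes n :: nat
  assumes v: "dot_on {..<n} v v = 1" and n: "0 < n"
  obtains H where "orthonormal_upto n H" and "\<And>i. i < n \<Longrightarrow> H 0 i = v i"
proof -
  \<comment> \<open>The Householder reflection exchanging the first unit vector and v.\<close>
  define e :: "nat \<Rightarrow> nat \<Rightarrow> real" where "e k i = (if i = k then 1 else 0)" for k i
  define w where "w i = v i - e 0 i" for i
  define W where "W = dot_on {..<n} w w"
  define c where "c = 2 / W"
  define H where "H k i = e k i - c * w i * w k" for k i
  have e_sum: "(\<Sum>i<n. f i * e k i) = f k" if "k < n" for f k
    unfolding e_def using that by (rule sum_lessThan_indicator)
  have W: "W = 2 - 2 * v 0"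
  proof -
    have "W = (\<Sum>i<n. v i * v i - 2 * (v i * e 0 i) + e 0 i * e 0 i)"
      unfolding W_def dot_on_def w_def by (intro sum.cong) (auto simp: algebra_simps)
    also have "\<dots> = dot_on {..<n} v v - 2 * (\<Sum>i<n. v i * e 0 i) + (\<Sum>i<n. e 0 i * e 0 i)"
      by (simp add: sum.distrib sum_subtractf dot_on_def sum_distrib_left)
    also have "\<dots> = dot_on {..<n} v v - 2 * v 0 + 1"
      using e_sum[OF n, of v] e_sum[OF n, of "e 0"] by (simp add: e_def)
    finally show ?thesis using v by simp
  qed
  have "H 0 i = v i" if i: "i < n" for i
  proof (cases "W = 0")
    case True
    have "\<forall>j\<in>{..<n}. w j * w j = 0"
      using True unfolding W_def dot_on_def by (subst sum_nonneg_eq_0_iff[symmetric]) auto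
    thus ?thesis using True i unfolding H_def c_def w_def by simp
  next
    case False
    have "c * w 0 = -1" using False W unfolding c_def w_def e_def by (simp add: field_simps)
    hence "c * w i * w 0 = - w i" by (metis mult.commute mult_minus1_right mult.assoc)
    thus ?thesis unfolding H_def w_def by simp
  qed
  moreover have "orthonormal_upto n H"
    unfolding orthonormal_upto_def
  proof (intro allI impI)
    fix k l assume k: "k < n" and l: "l < n"
    have cW: "c * c * W = 2 * c" unfolding c_def by (cases "W = 0") (auto simp: field_simps)
    have ew: "dot_on {..<n} (e k) w = w k" if "k < n" for k
      unfolding dot_on_def using e_sum[OF that, of w] by (simp add: mult.commute)
    have ee: "dot_on {..<n} (e k) (e l) = (if k = l then 1 else 0)"
      unfolding dot_on_def using e_sum[OF l, of "e k"] by (simp add: e_def)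
    have "dot_on {..<n} (H k) (H l) = dot_on {..<n} (e k) (e l) - c * w k * dot_on {..<n} (e l) w
       - c * w l * dot_on {..<n} (e k) w + c * c * w k * w l * W"
      unfolding H_def dot_on_def W_def
      by (simp add: algebra_simps sum.distrib sum_subtractf sum_distrib_left)
    also have "\<dots> = (if k = l then 1 else 0) + w k * w l * (c * c * W - 2 * c)"
      unfolding ee ew[OF k] ew[OF l] by (simp add: algebra_simps)
    finally show "dot_on {..<n} (H k) (H l) = (if k = l then 1 else 0)" using cW by simp
  qed
  ultimately show ?thesis using that by blast
qed

lemma orthonormal_upto_columns:
  assumes "orthonormal_upto n V" and i: "i < n" and j: "j < n"
  shows "(\<Sum>k<n. V k i * V k j) = (if i = j then 1 else 0)"
proof -
  define U where "U = mat n n (\<lambda>(i,k). V k i)"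
  define U' where "U' = mat n n (\<lambda>(k,i). V k i)"
  have U: "U \<in> carrier_mat n n" "U' \<in> carrier_mat n n" unfolding U_def U'_def by auto
  have "U' * U = 1\<^sub>m n"
  proof (rule eq_matI)
    fix k l assume "k < dim_row (1\<^sub>m n :: real mat)" "l < dim_col (1\<^sub>m n :: real mat)"
    thus "(U' * U) $$ (k, l) = 1\<^sub>m n $$ (k, l)"
      using orthonormal_uptoD[OF assms(1)] unfolding U'_def U_def dot_on_def
      by (simp add: scalar_prod_def atLeast0LessThan)
  qed (auto simp: U_def U'_def)
  \<comment> \<open>A one-sided inverse of a square matrix is two-sided.\<close>
  hence "U * U' = 1\<^sub>m n" using mat_mult_left_right_inverse[OF U(2) U(1)] by simp
  hence "(U * U') $$ (i, j) = (if i = j then 1 else 0)" using i j by simp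
  thus ?thesis using i j unfolding U_def U'_def by (simp add: scalar_prod_def atLeast0LessThan)
qed

lemma orthonormal_upto_expansion:
  assumes "orthonormal_upto n V" and i: "i < n"
  shows "z i = (\<Sum>k<n. dot_on {..<n} (V k) z * V k i)"
proof -
  have "(\<Sum>k<n. dot_on {..<n} (V k) z * V k i) = (\<Sum>k<n. \<Sum>j<n. V k j * z j * V k i)"
    unfolding dot_on_def by (simp add: sum_distrib_right)
  also have "\<dots> = (\<Sum>j<n. z j * (\<Sum>k<n. V k j * V k i))"
    by (subst sum.swap) (auto simp: sum_distrib_left algebra_simps intro!: sum.cong)
  also have "\<dots> = (\<Sum>j<n. z j * (if j = i then 1 else 0))"
    using orthonormal_upto_columns[OF assms(1) _ i] by (intro sum.cong) auto
  also have "\<dots> = z i" using i by (rule sum_lessThan_indicator)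
  finally show ?thesis by simp
qed

lemma orthonormal_upto_parseval:
  assumes "orthonormal_upto n V"
  shows "dot_on {..<n} y z = (\<Sum>k<n. dot_on {..<n} (V k) y * dot_on {..<n} (V k) z)"
proof -
  have "dot_on {..<n} y z = dot_on {..<n} y (\<lambda>i. \<Sum>k<n. dot_on {..<n} (V k) z * V k i)"
    using orthonormal_upto_expansion[OF assms] by (intro dot_on_cong) auto
  also have "\<dots> = (\<Sum>k<n. dot_on {..<n} (V k) z * dot_on {..<n} y (V k))"
    by (rule dot_on_sum_right)
  finally show ?thesis by (simp add: dot_on_commute[of _ y] mult.commute)
qed

lemma orthonormal_upto_norm:
  "orthonormal_upto n V \<Longrightarrow> dot_on {..<n} x x = (\<Sum>k<n. (dot_on {..<n} (V k) x)^2)"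
  using orthonormal_upto_parseval[of n V x x] by (simp add: power2_eq_square)

text \<open>For an orthonormal basis H of R^(m+1), the compression is the matrix of C on the
  orthogonal complement of H 0, in the basis H 1, ..., H m. The lifted basis reads an orthonormal
  family of R^m in these coordinates and puts H 0 in front of it.\<close>

definition compression ::
    "nat \<Rightarrow> (nat \<Rightarrow> nat \<Rightarrow> real) \<Rightarrow> (nat \<Rightarrow> nat \<Rightarrow> real) \<Rightarrow> nat \<Rightarrow> nat \<Rightarrow> real" where
  "compression m C H a b = dot_on {..<Suc m} (H (Suc a)) (mat_vec_on {..<Suc m} C (H (Suc b)))"

definition lift_basis ::
    "nat \<Rightarrow> (nat \<Rightarrow> nat \<Rightarrow> real) \<Rightarrow> (nat \<Rightarrow> nat \<Rightarrow> real) \<Rightarrow> nat \<Rightarrow> nat \<Rightarrow> real" where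
  "lift_basis m H W k = (if k = 0 then H 0 else (\<lambda>i. \<Sum>b<m. W (k - 1) b * H (Suc b) i))"

lemma dot_on_lift_basis:
  assumes H: "orthonormal_upto (Suc m) H"
  shows "dot_on {..<Suc m} (H 0) (lift_basis m H W (Suc a)) = 0"
    and "b < m \<Longrightarrow> dot_on {..<Suc m} (H (Suc b)) (lift_basis m H W (Suc a)) = W a b"
proof -
  have lift: "dot_on {..<Suc m} (H k) (lift_basis m H W (Suc a))
      = (\<Sum>b'<m. W a b' * (if k = Suc b' then 1 else 0))" if "k < Suc m" for k
    unfolding lift_basis_def using orthonormal_uptoD[OF H that]
    by (simp add: dot_on_sum_right)
  show "dot_on {..<Suc m} (H 0) (lift_basis m H W (Suc a)) = 0" using lift[of 0] by simp
  show "dot_on {..<Suc m} (H (Suc b)) (lift_basis m H W (Suc a)) = W a b" if "b < m"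
    using lift[of "Suc b"] that sum_lessThan_indicator[OF that, of "W a"] by (simp add: eq_commute)
qed

lemma orthonormal_upto_lift_basis:
  assumes H: "orthonormal_upto (Suc m) H" and W: "orthonormal_upto m W"
  shows "orthonormal_upto (Suc m) (lift_basis m H W)"
  unfolding orthonormal_upto_def
proof (intro allI impI)
  fix k l assume k: "k < Suc m" and l: "l < Suc m"
  show "dot_on {..<Suc m} (lift_basis m H W k) (lift_basis m H W l) = (if k = l then 1 else 0)"
  proof (cases k)
    case 0
    thus ?thesis using orthonormal_uptoD[OF H, of 0 0] dot_on_lift_basis(1)[OF H]
      by (cases l) (simp_all add: lift_basis_def)
  next
    case (Suc a)
    show ?thesis
    proof (cases l)
      case 0
      thus ?thesis using \<open>k = Suc a\<close> dot_on_lift_basis(1)[OF H]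
        by (simp add: lift_basis_def dot_on_commute)
    next
      case (Suc b)
      have a: "a < m" and b: "b < m" using k l \<open>k = Suc a\<close> \<open>l = Suc b\<close> by auto
      have "dot_on {..<Suc m} (lift_basis m H W (Suc a)) (lift_basis m H W (Suc b))
          = (\<Sum>b'<m. W a b' * dot_on {..<Suc m} (H (Suc b')) (lift_basis m H W (Suc b)))"
        by (subst (1) lift_basis_def) (simp add: dot_on_sum_left)
      also have "\<dots> = dot_on {..<m} (W a) (W b)"
        unfolding dot_on_def[of "{..<m}"] using dot_on_lift_basis(2)[OF H] by (intro sum.cong) auto
      finally show ?thesis using orthonormal_uptoD[OF W a b] \<open>k = Suc a\<close> \<open>l = Suc b\<close> by simp
    qed
  qed
qed

lemma mat_vec_on_lift_basis_Suc:
  assumes sym: "symmetric_on {..<Suc m} C" and H: "orthonormal_upto (Suc m) H"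
    and ev: "\<And>i. i < Suc m \<Longrightarrow> mat_vec_on {..<Suc m} C (H 0) i = \<mu>\<^sub>0 * H 0 i"
    and E: "eigenbasis m (compression m C H) W \<nu>" and a: "a < m" and i: "i < Suc m"
  shows "mat_vec_on {..<Suc m} C (lift_basis m H W (Suc a)) i = \<nu> a * lift_basis m H W (Suc a) i"
proof -
  define Y where "Y = lift_basis m H W (Suc a)"
  define z where "z = mat_vec_on {..<Suc m} C Y"
  have "dot_on {..<Suc m} (H 0) z = dot_on {..<Suc m} Y (mat_vec_on {..<Suc m} C (H 0))"
    unfolding z_def by (rule dot_on_mat_vec_symmetric[OF sym])
  also have "\<dots> = dot_on {..<Suc m} Y (\<lambda>i. \<mu>\<^sub>0 * H 0 i)" using ev by (intro dot_on_cong) auto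
  also have "\<dots> = 0"
    using dot_on_lift_basis(1)[OF H] unfolding Y_def by (simp add: dot_on_scale_right dot_on_commute)
  finally have z0: "dot_on {..<Suc m} (H 0) z = 0" .
  have zS: "dot_on {..<Suc m} (H (Suc b)) z = \<nu> a * W a b" if b: "b < m" for b
  proof -
    have "dot_on {..<Suc m} (H (Suc b)) z = (\<Sum>b'<m. W a b' * compression m C H b b')"
      unfolding z_def Y_def lift_basis_def compression_def by (simp add: mat_vec_on_sum dot_on_sum_right)
    also have "\<dots> = mat_vec_on {..<m} (compression m C H) (W a) b"
      unfolding mat_vec_on_def by (simp add: mult.commute)
    also have "\<dots> = \<nu> a * W a b" using eigenbasisD(2)[OF E a b] .
    finally show ?thesis .
  qed
  have "z i = (\<Sum>k<Suc m. dot_on {..<Suc m} (H k) z * H k i)"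
    by (rule orthonormal_upto_expansion[OF H i])
  also have "\<dots> = (\<Sum>b<m. \<nu> a * W a b * H (Suc b) i)"
    unfolding sum.lessThan_Suc_shift using z0 zS by simp
  also have "\<dots> = \<nu> a * Y i" unfolding Y_def lift_basis_def by (simp add: sum_distrib_left mult.assoc)
  finally show ?thesis unfolding z_def Y_def .
qed

lemma eigenbasis_lift_basis:
  assumes sym: "symmetric_on {..<Suc m} C" and H: "orthonormal_upto (Suc m) H"
    and ev: "\<And>i. i < Suc m \<Longrightarrow> mat_vec_on {..<Suc m} C (H 0) i = \<mu>\<^sub>0 * H 0 i"
    and E: "eigenbasis m (compression m C H) W \<nu>"
  shows "eigenbasis (Suc m) C (lift_basis m H W) (\<lambda>k. if k = 0 then \<mu>\<^sub>0 else \<nu> (k - 1))"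
  unfolding eigenbasis_def
proof (intro conjI allI impI)
  show "orthonormal_upto (Suc m) (lift_basis m H W)"
    by (rule orthonormal_upto_lift_basis[OF H eigenbasisD(1)[OF E]])
next
  fix k i assume k: "k < Suc m" and i: "i < Suc m"
  show "mat_vec_on {..<Suc m} C (lift_basis m H W k) i
      = (if k = 0 then \<mu>\<^sub>0 else \<nu> (k - 1)) * lift_basis m H W k i"
    using ev[OF i] mat_vec_on_lift_basis_Suc[OF sym H ev E _ i] k
    by (cases k) (simp_all add: lift_basis_def)
qed

theorem symmetric_eigenbasis_exists: "symmetric_on {..<n} C \<Longrightarrow> \<exists>V \<mu>. eigenbasis n C V \<mu>"
proof (induction n arbitrary: C)
  case 0
  show ?case unfolding eigenbasis_def orthonormal_upto_def by simp
next
  case (Suc m)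
  obtain \<mu>\<^sub>0 x where ev: "\<And>i. i < Suc m \<Longrightarrow> mat_vec_on {..<Suc m} C x i = \<mu>\<^sub>0 * x i"
    and nz: "\<exists>i<Suc m. x i \<noteq> 0"
    using symmetric_real_eigenvector_exists[OF zero_less_Suc Suc.prems] by metis
  have pos: "0 < dot_on {..<Suc m} x x" using nz by (auto intro: dot_on_self_pos)
  define v where "v i = x i / sqrt (dot_on {..<Suc m} x x)" for i
  have "dot_on {..<Suc m} v v = 1"
    using pos unfolding v_def dot_on_def by (simp add: sum_divide_distrib[symmetric] power2_eq_square)
  then obtain H where H: "orthonormal_upto (Suc m) H" and H0: "\<And>i. i < Suc m \<Longrightarrow> H 0 i = v i"
    using unit_vector_orthonormal_completion[OF _ zero_less_Suc] by metis
  have evH: "mat_vec_on {..<Suc m} C (H 0) i = \<mu>\<^sub>0 * H 0 i" if "i < Suc m" for i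
  proof -
    have "mat_vec_on {..<Suc m} C (H 0) i = (\<Sum>j<Suc m. C i j * x j / sqrt (dot_on {..<Suc m} x x))"
      unfolding mat_vec_on_def using H0 by (intro sum.cong) (auto simp: v_def)
    also have "\<dots> = mat_vec_on {..<Suc m} C x i / sqrt (dot_on {..<Suc m} x x)"
      unfolding mat_vec_on_def by (rule sum_divide_distrib[symmetric])
    finally have "mat_vec_on {..<Suc m} C (H 0) i = mat_vec_on {..<Suc m} C x i / sqrt (dot_on {..<Suc m} x x)" .
    thus ?thesis using ev[OF that] H0[OF that] unfolding v_def by simp
  qed
  have "symmetric_on {..<m} (compression m C H)"
    unfolding symmetric_on_def compression_def
    using dot_on_mat_vec_symmetric[OF Suc.prems] by auto
  then obtain W \<nu> where "eigenbasis m (compression m C H) W \<nu>" using Suc.IH by blast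
  thus ?case using eigenbasis_lift_basis[OF Suc.prems H evH] by blast
qed

lemma eigenbasis_eigenvalue:
  assumes E: "eigenbasis n C V \<mu>" and k: "k < n"
  shows "\<mu> k = dot_on {..<n} (V k) (mat_vec_on {..<n} C (V k))"
proof -
  have "dot_on {..<n} (V k) (mat_vec_on {..<n} C (V k)) = dot_on {..<n} (V k) (\<lambda>i. \<mu> k * V k i)"
    using eigenbasisD(2)[OF E k] by (intro dot_on_cong) auto
  thus ?thesis using orthonormal_uptoD[OF eigenbasisD(1)[OF E] k k] by (simp add: dot_on_scale_right)
qed

lemma eigenbasis_dot_mat_vec:
  assumes sym: "symmetric_on {..<n} C" and E: "eigenbasis n C V \<mu>" and k: "k < n"
  shows "dot_on {..<n} (V k) (mat_vec_on {..<n} C x) = \<mu> k * dot_on {..<n} (V k) x"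
proof -
  have "dot_on {..<n} (V k) (mat_vec_on {..<n} C x) = dot_on {..<n} x (mat_vec_on {..<n} C (V k))"
    by (rule dot_on_mat_vec_symmetric[OF sym])
  also have "\<dots> = dot_on {..<n} x (\<lambda>i. \<mu> k * V k i)"
    using eigenbasisD(2)[OF E k] by (intro dot_on_cong) auto
  finally show ?thesis by (simp add: dot_on_scale_right dot_on_commute)
qed

lemma eigenbasis_quadratic_form:
  assumes sym: "symmetric_on {..<n} C" and E: "eigenbasis n C V \<mu>"
  shows "dot_on {..<n} x (mat_vec_on {..<n} C x) = (\<Sum>k<n. \<mu> k * (dot_on {..<n} (V k) x)^2)"
  unfolding orthonormal_upto_parseval[OF eigenbasisD(1)[OF E], of x]
  using eigenbasis_dot_mat_vec[OF sym E] by (intro sum.cong) (auto simp: power2_eq_square)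

lemma proots_prod_linear_factors: "proots (\<Prod>a\<leftarrow>xs. [:- a, 1:]) = mset (xs :: real list)"
proof (induction xs)
  case (Cons a xs)
  have "(\<Prod>a\<leftarrow>xs. [:- a, 1:]) \<noteq> 0" by (auto simp: prod_list_zero_iff)
  hence "proots ([:- a, 1:] * (\<Prod>a\<leftarrow>xs. [:- a, 1:])) = proots [:- a, 1:] + proots (\<Prod>a\<leftarrow>xs. [:- a, 1:])"
    by (intro proots_mult) auto
  thus ?case using Cons.IH by (simp del: mult_pCons_left)
qed simp

lemma eigenbasis_char_poly:
  assumes E: "eigenbasis n C V \<mu>"
  shows "proots (char_poly (mat n n (\<lambda>(i, j). C i j))) = mset (map \<mu> [0..<n])"
proof -
  have V: "orthonormal_upto n V" by (rule eigenbasisD(1)[OF E])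
  define U where "U = mat n n (\<lambda>(i, k). V k i)"
  define U' where "U' = mat n n (\<lambda>(k, i). V k i)"
  define D where "D = mat n n (\<lambda>(i, j). if i = j then \<mu> i else 0)"
  have U: "U \<in> carrier_mat n n" "U' \<in> carrier_mat n n" and D: "D \<in> carrier_mat n n"
    unfolding U_def U'_def D_def by auto
  have UU': "U * U' = 1\<^sub>m n"
    by (rule eq_matI) (auto simp: U_def U'_def scalar_prod_def atLeast0LessThan
        orthonormal_upto_columns[OF V])
  have U'U: "U' * U = 1\<^sub>m n" using mat_mult_left_right_inverse[OF U UU'] .
  have "mat n n (\<lambda>(i, j). C i j) = U * D * U'"
  proof (rule eq_matI)
    fix i j assume "i < dim_row (U * D * U')" "j < dim_col (U * D * U')"
    hence i: "i < n" and j: "j < n" using U by auto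
    have UD: "(U * D) $$ (i, k) = \<mu> k * V k i" if "k < n" for k
    proof -
      have "(U * D) $$ (i, k) = (\<Sum>l<n. V l i * (if l = k then \<mu> l else 0))"
        using i that unfolding U_def D_def by (simp add: scalar_prod_def atLeast0LessThan)
      also have "\<dots> = (\<Sum>l<n. (V l i * \<mu> l) * (if l = k then 1 else 0))" by (intro sum.cong) auto
      finally show ?thesis using sum_lessThan_indicator[OF that] by simp
    qed
    have "(U * D * U') $$ (i, j) = (\<Sum>k<n. (U * D) $$ (i, k) * V k j)"
      using i j U D unfolding U'_def by (simp add: scalar_prod_def atLeast0LessThan)
    also have "\<dots> = (\<Sum>k<n. mat_vec_on {..<n} C (V k) i * V k j)"
      using UD eigenbasisD(2)[OF E _ i] by (intro sum.cong) auto
    also have "\<dots> = (\<Sum>k<n. \<Sum>l<n. C i l * (V k l * V k j))"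
      unfolding mat_vec_on_def by (simp add: sum_distrib_right mult.assoc)
    also have "\<dots> = (\<Sum>l<n. C i l * (\<Sum>k<n. V k l * V k j))"
      by (subst sum.swap) (simp add: sum_distrib_left)
    also have "\<dots> = (\<Sum>l<n. C i l * (if l = j then 1 else 0))"
      using orthonormal_upto_columns[OF V _ j] by (intro sum.cong) auto
    also have "\<dots> = C i j" using j by (rule sum_lessThan_indicator)
    finally show "mat n n (\<lambda>(i, j). C i j) $$ (i, j) = (U * D * U') $$ (i, j)" using i j by simp
  qed (use U in auto)
  hence "similar_mat (mat n n (\<lambda>(i, j). C i j)) D"
    unfolding similar_mat_def similar_mat_wit_def using U D UU' U'U
    by (intro exI[of _ U] exI[of _ U']) (auto simp: Let_def)
  hence "char_poly (mat n n (\<lambda>(i, j). C i j)) = char_poly D" by (rule char_poly_similar)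
  also have "\<dots> = (\<Prod>a\<leftarrow>diag_mat D. [:- a, 1:])"
    by (rule char_poly_upper_triangular[OF D]) (auto simp: upper_triangular_def D_def)
  also have "diag_mat D = map \<mu> [0..<n]" unfolding diag_mat_def D_def by auto
  finally show ?thesis by (simp only: proots_prod_linear_factors)
qed

section \<open>Variational bounds for the second singular value\<close>

lemma eigenbasis_pair:
  fixes \<alpha> \<beta> :: real
  assumes sym: "symmetric_on {..<n} C" and E: "eigenbasis n C V \<mu>"
    and k: "k1 < n" "k2 < n" "k1 \<noteq> k2"
  defines "x \<equiv> \<lambda>i. \<alpha> * V k1 i + \<beta> * V k2 i"
  shows "dot_on {..<n} x (mat_vec_on {..<n} C x) = \<mu> k1 * \<alpha>^2 + \<mu> k2 * \<beta>^2"
    and "dot_on {..<n} x x = \<alpha>^2 + \<beta>^2"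
    and "dot_on {..<n} x u = \<alpha> * dot_on {..<n} (V k1) u + \<beta> * dot_on {..<n} (V k2) u"
proof -
  have dot_x: "dot_on {..<n} x y = \<alpha> * dot_on {..<n} (V k1) y + \<beta> * dot_on {..<n} (V k2) y" for y
    unfolding x_def dot_on_def by (simp add: sum.distrib sum_distrib_left algebra_simps)
  have x_dot: "dot_on {..<n} y x = \<alpha> * dot_on {..<n} y (V k1) + \<beta> * dot_on {..<n} y (V k2)" for y
    unfolding x_def dot_on_def by (simp add: sum.distrib sum_distrib_left algebra_simps)
  have VV: "dot_on {..<n} (V k) (V l) = (if k = l then 1 else 0)" if "k < n" "l < n" for k l
    using orthonormal_uptoD[OF eigenbasisD(1)[OF E] that] .
  show "dot_on {..<n} x u = \<alpha> * dot_on {..<n} (V k1) u + \<beta> * dot_on {..<n} (V k2) u"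
    by (rule dot_x)
  show "dot_on {..<n} x x = \<alpha>^2 + \<beta>^2"
    unfolding dot_x x_dot using k VV by (simp add: power2_eq_square)
  show "dot_on {..<n} x (mat_vec_on {..<n} C x) = \<mu> k1 * \<alpha>^2 + \<mu> k2 * \<beta>^2"
    unfolding dot_x eigenbasis_dot_mat_vec[OF sym E k(1)] eigenbasis_dot_mat_vec[OF sym E k(2)] x_dot
    using k VV by (simp add: power2_eq_square)
qed

lemma eigenbasis_card_eigenvalues_gt:
  assumes sym: "symmetric_on {..<n} C" and E: "eigenbasis n C V \<mu>"
    and bound: "\<And>x. dot_on {..<n} x u = 0 \<Longrightarrow>
      dot_on {..<n} x (mat_vec_on {..<n} C x) \<le> c * dot_on {..<n} x x"
  shows "card {k. k < n \<and> c < \<mu> k} \<le> 1"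
proof (rule ccontr)
  assume "\<not> ?thesis"
  then obtain k1 k2 where k: "k1 < n" "k2 < n" "k1 \<noteq> k2" and \<mu>: "c < \<mu> k1" "c < \<mu> k2"
    using card_le_Suc0_iff_eq[of "{k. k < n \<and> c < \<mu> k}"] by auto
  define a1 where "a1 = dot_on {..<n} (V k1) u"
  define a2 where "a2 = dot_on {..<n} (V k2) u"
  \<comment> \<open>A nonzero combination of V k1 and V k2 orthogonal to u.\<close>
  define \<alpha> where "\<alpha> = (if a1 = 0 then 1 else a2)"
  define \<beta> where "\<beta> = (if a1 = 0 then 0 else - a1)"
  define x where "x = (\<lambda>i. \<alpha> * V k1 i + \<beta> * V k2 i)"
  note pair = eigenbasis_pair[OF sym E k, of \<alpha> \<beta>, folded x_def]
  have "dot_on {..<n} x u = 0" unfolding pair(3) \<alpha>_def \<beta>_def a1_def[symmetric] a2_def[symmetric] by simp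
  hence "\<mu> k1 * \<alpha>^2 + \<mu> k2 * \<beta>^2 \<le> c * (\<alpha>^2 + \<beta>^2)"
    using bound[of x] unfolding pair(1,2) by blast
  moreover have "c * \<alpha>^2 \<le> \<mu> k1 * \<alpha>^2" and "c * \<beta>^2 \<le> \<mu> k2 * \<beta>^2"
    using \<mu> by (simp_all add: mult_right_mono)
  moreover have "c * \<alpha>^2 < \<mu> k1 * \<alpha>^2 \<or> c * \<beta>^2 < \<mu> k2 * \<beta>^2"
    using \<mu> unfolding \<alpha>_def \<beta>_def by auto
  ultimately show False by (simp add: algebra_simps)
qed

lemma eigenbasis_top_vector_coefficient:
  assumes sym: "symmetric_on {..<n} C" and E: "eigenbasis n C V \<mu>"
    and le1: "\<And>k. k < n \<Longrightarrow> \<mu> k \<le> 1"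
    and top: "dot_on {..<n} u (mat_vec_on {..<n} C u) = dot_on {..<n} u u"
    and k: "k < n" "\<mu> k < 1"
  shows "dot_on {..<n} (V k) u = 0"
proof -
  have "(\<Sum>l<n. (1 - \<mu> l) * (dot_on {..<n} (V l) u)^2) = 0"
    using top unfolding eigenbasis_quadratic_form[OF sym E] orthonormal_upto_norm[OF eigenbasisD(1)[OF E]]
    by (simp add: sum_subtractf left_diff_distrib)
  moreover have "\<forall>l\<in>{..<n}. 0 \<le> (1 - \<mu> l) * (dot_on {..<n} (V l) u)^2"
    using le1 by auto
  ultimately have "(1 - \<mu> k) * (dot_on {..<n} (V k) u)^2 = 0"
    using k(1) sum_nonneg_eq_0_iff[of "{..<n}" "\<lambda>l. (1 - \<mu> l) * (dot_on {..<n} (V l) u)^2"] by simp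
  thus ?thesis using k by simp
qed

lemma eigenbasis_orthogonal_above:
  assumes sym: "symmetric_on {..<n} C" and E: "eigenbasis n C V \<mu>"
    and le1: "\<And>k. k < n \<Longrightarrow> \<mu> k \<le> 1"
    and u: "\<exists>i<n. u i \<noteq> 0" and top: "dot_on {..<n} u (mat_vec_on {..<n} C u) = dot_on {..<n} u u"
    and card: "card {k. k < n \<and> T < \<mu> k} \<le> 1" and xu: "dot_on {..<n} x u = 0"
    and k: "k < n" "T < \<mu> k"
  shows "dot_on {..<n} (V k) x = 0"
proof -
  have V: "orthonormal_upto n V" by (rule eigenbasisD(1)[OF E])
  define a where "a l = dot_on {..<n} (V l) u" for l
  \<comment> \<open>V k is the only eigenvector along which u has a component.\<close>
  have others: "a l = 0" if l: "l < n" "l \<noteq> k" for l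
  proof -
    have "\<not> T < \<mu> l"
    proof
      assume "T < \<mu> l"
      hence "{k, l} \<subseteq> {k. k < n \<and> T < \<mu> k}" using k l by auto
      from card_mono[OF _ this] have "card {k, l} \<le> 1" using card by simp
      thus False using l(2) by simp
    qed
    hence "\<mu> l < 1" using k le1[OF k(1)] by linarith
    show ?thesis unfolding a_def
      by (rule eigenbasis_top_vector_coefficient[OF sym E le1 top l(1) \<open>\<mu> l < 1\<close>])
  qed
  have "a k \<noteq> 0"
  proof
    assume "a k = 0"
    obtain i where i: "i < n" "u i \<noteq> 0" using u by blast
    have "u i = (\<Sum>l<n. a l * V l i)" using orthonormal_upto_expansion[OF V i(1)] unfolding a_def .
    also have "\<dots> = 0" using others \<open>a k = 0\<close> by (intro sum.neutral) auto
    finally show False using i by simp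
  qed
  moreover have "(\<Sum>l<n. dot_on {..<n} (V l) x * a l) = 0"
    using xu unfolding orthonormal_upto_parseval[OF V, of x u] a_def .
  moreover have "(\<Sum>l<n. dot_on {..<n} (V l) x * a l) = (\<Sum>l<n. if l = k then dot_on {..<n} (V l) x * a l else 0)"
    using others by (intro sum.cong) auto
  ultimately show ?thesis using k by (simp add: sum.delta)
qed

lemma eigenbasis_quadratic_form_le:
  assumes sym: "symmetric_on {..<n} C" and E: "eigenbasis n C V \<mu>"
    and le1: "\<And>k. k < n \<Longrightarrow> \<mu> k \<le> 1"
    and u: "\<exists>i<n. u i \<noteq> 0" and top: "dot_on {..<n} u (mat_vec_on {..<n} C u) = dot_on {..<n} u u"
    and card: "card {k. k < n \<and> T < \<mu> k} \<le> 1" and xu: "dot_on {..<n} x u = 0"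
  shows "dot_on {..<n} x (mat_vec_on {..<n} C x) \<le> T * dot_on {..<n} x x"
proof -
  have "\<mu> k * (dot_on {..<n} (V k) x)^2 \<le> T * (dot_on {..<n} (V k) x)^2" if k: "k < n" for k
  proof (cases "\<mu> k \<le> T")
    case True thus ?thesis by (intro mult_right_mono) auto
  next
    case False
    thus ?thesis using eigenbasis_orthogonal_above[OF sym E le1 u top card xu k] by simp
  qed
  hence "(\<Sum>k<n. \<mu> k * (dot_on {..<n} (V k) x)^2) \<le> (\<Sum>k<n. T * (dot_on {..<n} (V k) x)^2)"
    by (intro sum_mono) auto
  thus ?thesis
    unfolding eigenbasis_quadratic_form[OF sym E] orthonormal_upto_norm[OF eigenbasisD(1)[OF E], of x]
    by (simp add: sum_distrib_left)
qed

lemma card_greater_sort: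
  "card {k. k < length xs \<and> c < sort xs ! k} = card {k. k < length xs \<and> c < xs ! k}"
proof -
  have "card {k. k < length xs \<and> c < sort xs ! k} = length (filter (\<lambda>y. c < y) (sort xs))"
    by (simp add: length_filter_conv_card)
  also have "\<dots> = length (filter (\<lambda>y. c < y) xs)" by (simp add: filter_sort)
  finally show ?thesis by (simp add: length_filter_conv_card)
qed

lemma card_greater_second_largest:
  fixes xs :: "'a :: linorder list"
  assumes "2 \<le> length xs"
  shows "card {k. k < length xs \<and> rev (sort xs) ! 1 < xs ! k} \<le> 1"
proof -
  define m where "m = length xs"
  have second: "rev (sort xs) ! 1 = sort xs ! (m - 2)"
    using assms unfolding m_def by (simp add: rev_nth numeral_2_eq_2)
  have "{k. k < m \<and> sort xs ! (m - 2) < sort xs ! k} \<subseteq> {m - 1}"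
  proof
    fix k assume k: "k \<in> {k. k < m \<and> sort xs ! (m - 2) < sort xs ! k}"
    show "k \<in> {m - 1}"
    proof (rule ccontr)
      assume "k \<notin> {m - 1}"
      hence "k \<le> m - 2" using k by auto
      hence "sort xs ! k \<le> sort xs ! (m - 2)" using assms unfolding m_def by (intro sorted_nth_mono) auto
      thus False using k leD by blast
    qed
  qed
  from card_mono[OF _ this] show ?thesis
    using card_greater_sort[of xs] second unfolding m_def by simp
qed

lemma second_largest_le:
  fixes xs :: "'a :: linorder list"
  assumes "2 \<le> length xs" and "card {k. k < length xs \<and> c < xs ! k} \<le> 1"
  shows "rev (sort xs) ! 1 \<le> c"
proof (rule ccontr)
  define m where "m = length xs"
  assume "\<not> ?thesis"
  hence "c < sort xs ! (m - 2)" using assms(1) unfolding m_def by (simp add: rev_nth numeral_2_eq_2)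
  moreover have "sort xs ! (m - 2) \<le> sort xs ! (m - 1)"
    using assms(1) unfolding m_def by (intro sorted_nth_mono) auto
  ultimately have "{m - 2, m - 1} \<subseteq> {k. k < m \<and> c < sort xs ! k}" using assms(1) m_def by auto
  from card_mono[OF _ this] have "card {m - 2, m - 1} \<le> 1"
    using assms(2) card_greater_sort[of xs] unfolding m_def by simp
  thus False using assms(1) m_def by simp
qed

lemma second_largest_sqrt:
  fixes \<mu> :: "nat \<Rightarrow> real"
  assumes nonneg: "\<And>k. k < n \<Longrightarrow> 0 \<le> \<mu> k"
    and t: "t = (if 2 \<le> n then rev (sort (map (\<lambda>k. sqrt (\<mu> k)) [0..<n])) ! 1 else 0)"
  shows "0 \<le> t" and "card {k. k < n \<and> t^2 < \<mu> k} \<le> 1"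
proof -
  have "0 \<le> t \<and> card {k. k < n \<and> t^2 < \<mu> k} \<le> 1"
  proof (cases "2 \<le> n")
    case True
    define xs where "xs = map (\<lambda>k. sqrt (\<mu> k)) [0..<n]"
    have t_xs: "t = rev (sort xs) ! 1" unfolding t xs_def using True by simp
    have "t \<in> set (rev (sort xs))" unfolding t_xs using True xs_def by (intro nth_mem) auto
    hence "t \<in> (\<lambda>k. sqrt (\<mu> k)) ` {..<n}" unfolding xs_def by (simp add: atLeast0LessThan)
    hence "0 \<le> t" using nonneg by auto
    have "{k. k < n \<and> t^2 < \<mu> k} \<subseteq> {k. k < length xs \<and> t < xs ! k}"
    proof (intro subsetI CollectI)
      fix k assume k: "k \<in> {k. k < n \<and> t^2 < \<mu> k}"
      hence "sqrt (t^2) < sqrt (\<mu> k)" by (simp only: real_sqrt_less_iff mem_Collect_eq)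
      thus "k < length xs \<and> t < xs ! k" using k \<open>0 \<le> t\<close> unfolding xs_def by simp
    qed
    from card_mono[OF _ this] have "card {k. k < n \<and> t^2 < \<mu> k} \<le> 1"
      using card_greater_second_largest[of xs] True unfolding t_xs xs_def by simp
    thus ?thesis using \<open>0 \<le> t\<close> by simp
  next
    case False
    have "card {k. k < n \<and> t^2 < \<mu> k} \<le> card {..<n}" by (intro card_mono) auto
    thus ?thesis using False unfolding t by simp
  qed
  thus "0 \<le> t" and "card {k. k < n \<and> t^2 < \<mu> k} \<le> 1" by auto
qed

lemma enum_on_bij: "finite S \<Longrightarrow> bij_betw (enum_on S) {..<card S} S"
proof -
  assume "finite S"
  then obtain h where "bij_betw h {..<card S} S"
    using ex_bij_betw_nat_finite by (auto simp: atLeast0LessThan)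
  thus ?thesis unfolding enum_on_def using someI[of "\<lambda>f. bij_betw f {..<card S} S" h] by simp
qed

definition gram_upto :: "'a set \<Rightarrow> ('a \<Rightarrow> 'a \<Rightarrow> real) \<Rightarrow> nat \<Rightarrow> nat \<Rightarrow> real" where
  "gram_upto S M i j =
     (\<Sum>k<card S. M (enum_on S k) (enum_on S i) * M (enum_on S k) (enum_on S j))"

lemma transpose_to_mat_mult:
  "transpose_mat (to_mat S M) * to_mat S M = mat (card S) (card S) (\<lambda>(i, j). gram_upto S M i j)"
  by (rule eq_matI) (auto simp: to_mat_def gram_upto_def scalar_prod_def atLeast0LessThan)

lemma symmetric_gram_upto: "symmetric_on {..<card S} (gram_upto S M)"
  unfolding symmetric_on_def gram_upto_def by (auto simp: mult.commute)

context
  fixes S :: "'a set"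
  assumes S: "finite S"
begin

lemma enum_on_pullback: "\<exists>x. \<forall>i<card S. y i = x (enum_on S i)"
proof (intro exI allI impI)
  fix i assume "i < card S"
  thus "y i = y (inv_into {..<card S} (enum_on S) (enum_on S i))"
    using bij_betw_inv_into_left[OF enum_on_bij[OF S]] by simp
qed

lemma dot_on_enum_on:
  assumes "\<And>i. i < card S \<Longrightarrow> y i = x (enum_on S i)" and "\<And>i. i < card S \<Longrightarrow> z i = w (enum_on S i)"
  shows "dot_on {..<card S} y z = dot_on S x w"
  unfolding dot_on_def using assms sum.reindex_bij_betw[OF enum_on_bij[OF S], of "\<lambda>a. x a * w a"]
  by simp

lemma mat_vec_on_enum_on:
  "mat_vec_on S M x (enum_on S k) = (\<Sum>j<card S. M (enum_on S k) (enum_on S j) * x (enum_on S j))"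
  unfolding mat_vec_on_def
  by (rule sum.reindex_bij_betw[OF enum_on_bij[OF S], of "\<lambda>b. M (enum_on S k) b * x b", symmetric])

lemma gram_upto_quadratic_form:
  assumes y: "\<And>i. i < card S \<Longrightarrow> y i = x (enum_on S i)"
  shows "dot_on {..<card S} y (mat_vec_on {..<card S} (gram_upto S M) y)
       = dot_on S (mat_vec_on S M x) (mat_vec_on S M x)"
proof -
  define My where "My k = (\<Sum>j<card S. M (enum_on S k) (enum_on S j) * y j)" for k
  have "dot_on {..<card S} y (mat_vec_on {..<card S} (gram_upto S M) y)
      = (\<Sum>i<card S. \<Sum>j<card S. \<Sum>k<card S.
           y i * M (enum_on S k) (enum_on S i) * (M (enum_on S k) (enum_on S j) * y j))"
    by (simp add: dot_on_def mat_vec_on_def gram_upto_def sum_distrib_left sum_distrib_right mult_ac)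
  also have "\<dots> = (\<Sum>i<card S. \<Sum>k<card S. \<Sum>j<card S.
           y i * M (enum_on S k) (enum_on S i) * (M (enum_on S k) (enum_on S j) * y j))"
    by (intro sum.cong refl sum.swap)
  also have "\<dots> = (\<Sum>k<card S. \<Sum>i<card S. \<Sum>j<card S.
           y i * M (enum_on S k) (enum_on S i) * (M (enum_on S k) (enum_on S j) * y j))"
    by (rule sum.swap)
  also have "\<dots> = dot_on {..<card S} My My"
    by (simp add: My_def dot_on_def sum_distrib_left sum_distrib_right mult_ac)
  also have "\<dots> = dot_on S (mat_vec_on S M x) (mat_vec_on S M x)"
    using y by (intro dot_on_enum_on) (simp_all add: My_def mat_vec_on_enum_on)
  finally show ?thesis .
qed

lemma singular_values_eigenbasis:
  "\<exists>V \<mu>. eigenbasis (card S) (gram_upto S M) V \<mu> \<and> (\<forall>k<card S. 0 \<le> \<mu> k)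
     \<and> singular_values S M = rev (sort (map (\<lambda>k. sqrt (\<mu> k)) [0..<card S]))"
proof -
  obtain V \<mu> where E: "eigenbasis (card S) (gram_upto S M) V \<mu>"
    using symmetric_eigenbasis_exists[OF symmetric_gram_upto] by blast
  have "proots (char_poly (transpose_mat (to_mat S M) * to_mat S M)) = mset (map \<mu> [0..<card S])"
    unfolding transpose_to_mat_mult by (rule eigenbasis_char_poly[OF E])
  hence "singular_values S M = rev (sort (map (\<lambda>k. sqrt (\<mu> k)) [0..<card S]))"
    unfolding singular_values_def Let_def by (simp flip: mset_map add: o_def)
  moreover have "0 \<le> \<mu> k" if "k < card S" for k
  proof -
    obtain x where "\<forall>i<card S. V k i = x (enum_on S i)" using enum_on_pullback by blast
    thus ?thesis unfolding eigenbasis_eigenvalue[OF E that]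
      by (subst gram_upto_quadratic_form) (auto simp: dot_on_self_nonneg)
  qed
  ultimately show ?thesis using E by blast
qed

lemma gram_eigenvalue_le_1:
  assumes E: "eigenbasis (card S) (gram_upto S M) V \<mu>" and k: "k < card S"
    and contraction: "\<And>x. dot_on S (mat_vec_on S M x) (mat_vec_on S M x) \<le> dot_on S x x"
  shows "\<mu> k \<le> 1"
proof -
  obtain x where x: "\<forall>i<card S. V k i = x (enum_on S i)" using enum_on_pullback by blast
  have "\<mu> k = dot_on S (mat_vec_on S M x) (mat_vec_on S M x)"
    unfolding eigenbasis_eigenvalue[OF E k] using x by (simp add: gram_upto_quadratic_form)
  also have "\<dots> \<le> dot_on {..<card S} (V k) (V k)" using contraction x by (simp add: dot_on_enum_on)
  also have "\<dots> = 1" using orthonormal_uptoD[OF eigenbasisD(1)[OF E] k k] by simp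
  finally show ?thesis .
qed

theorem sigma2_le_sqrt:
  assumes "0 \<le> c"
    and bound: "\<And>x. dot_on S x u = 0 \<Longrightarrow> dot_on S (mat_vec_on S M x) (mat_vec_on S M x) \<le> c * dot_on S x x"
  shows "sigma2 S M \<le> sqrt c"
proof -
  obtain V \<mu> where E: "eigenbasis (card S) (gram_upto S M) V \<mu>"
    and sv: "singular_values S M = rev (sort (map (\<lambda>k. sqrt (\<mu> k)) [0..<card S]))"
    using singular_values_eigenbasis by blast
  have "dot_on {..<card S} y (mat_vec_on {..<card S} (gram_upto S M) y) \<le> c * dot_on {..<card S} y y"
    if "dot_on {..<card S} y (\<lambda>i. u (enum_on S i)) = 0" for y
  proof -
    obtain x where x: "\<forall>i<card S. y i = x (enum_on S i)" using enum_on_pullback by blast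
    have "dot_on S x u = 0" using that x by (subst dot_on_enum_on[symmetric]) auto
    thus ?thesis using bound x by (simp add: gram_upto_quadratic_form dot_on_enum_on)
  qed
  hence card: "card {k. k < card S \<and> c < \<mu> k} \<le> 1"
    by (rule eigenbasis_card_eigenvalues_gt[OF symmetric_gram_upto E])
  show ?thesis
  proof (cases "2 \<le> card S")
    case True
    define xs where "xs = map (\<lambda>k. sqrt (\<mu> k)) [0..<card S]"
    have "{k. k < length xs \<and> sqrt c < xs ! k} = {k. k < card S \<and> c < \<mu> k}"
      unfolding xs_def by auto
    hence "rev (sort xs) ! 1 \<le> sqrt c"
      using second_largest_le[of xs "sqrt c"] card True unfolding xs_def by simp
    thus ?thesis unfolding sigma2_def sv xs_def using True by simp
  next
    case False
    thus ?thesis unfolding sigma2_def sv using \<open>0 \<le> c\<close> by simp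
  qed
qed

theorem sigma2_bound_orthogonal:
  assumes u: "a \<in> S" "u a \<noteq> 0"
    and contraction: "\<And>x. dot_on S (mat_vec_on S M x) (mat_vec_on S M x) \<le> dot_on S x x"
    and top: "dot_on S (mat_vec_on S M u) (mat_vec_on S M u) = dot_on S u u"
  shows "0 \<le> sigma2 S M"
    and "dot_on S x u = 0 \<Longrightarrow>
      dot_on S (mat_vec_on S M x) (mat_vec_on S M x) \<le> (sigma2 S M)^2 * dot_on S x x"
proof -
  obtain V \<mu> where E: "eigenbasis (card S) (gram_upto S M) V \<mu>"
    and nonneg: "\<forall>k<card S. 0 \<le> \<mu> k"
    and sv: "singular_values S M = rev (sort (map (\<lambda>k. sqrt (\<mu> k)) [0..<card S]))"
    using singular_values_eigenbasis[of M] by blast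
  have sigma2: "sigma2 S M = (if 2 \<le> card S then rev (sort (map (\<lambda>k. sqrt (\<mu> k)) [0..<card S])) ! 1 else 0)"
    unfolding sigma2_def sv by simp
  show "0 \<le> sigma2 S M" by (rule second_largest_sqrt(1)[OF nonneg[rule_format] sigma2])
  define u' where "u' i = u (enum_on S i)" for i
  have le1: "\<mu> k \<le> 1" if "k < card S" for k
    using contraction by (rule gram_eigenvalue_le_1[OF E that])
  have unz: "\<exists>i<card S. u' i \<noteq> 0"
  proof -
    obtain i where "i < card S" "enum_on S i = a"
      using u(1) bij_betw_imp_surj_on[OF enum_on_bij[OF S]] by (metis imageE lessThan_iff)
    thus ?thesis using u(2) unfolding u'_def by blast
  qed
  have topu: "dot_on {..<card S} u' (mat_vec_on {..<card S} (gram_upto S M) u')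
      = dot_on {..<card S} u' u'"
    using top by (simp add: u'_def gram_upto_quadratic_form dot_on_enum_on)
  assume "dot_on S x u = 0"
  hence xu: "dot_on {..<card S} (\<lambda>i. x (enum_on S i)) u' = 0" by (simp add: u'_def dot_on_enum_on)
  have "dot_on {..<card S} (\<lambda>i. x (enum_on S i))
      (mat_vec_on {..<card S} (gram_upto S M) (\<lambda>i. x (enum_on S i)))
      \<le> (sigma2 S M)^2 * dot_on {..<card S} (\<lambda>i. x (enum_on S i)) (\<lambda>i. x (enum_on S i))"
    by (rule eigenbasis_quadratic_form_le[OF symmetric_gram_upto E le1 unz topu
          second_largest_sqrt(2)[OF nonneg[rule_format] sigma2] xu])
  thus "dot_on S (mat_vec_on S M x) (mat_vec_on S M x) \<le> (sigma2 S M)^2 * dot_on S x x"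
    by (simp add: gram_upto_quadratic_form dot_on_enum_on)
qed

end

section \<open>Normalized adjacency matrices of rotation maps\<close>

lemma sum_card_fiber:
  assumes "finite S" "finite J" and "\<And>j. j \<in> J \<Longrightarrow> g j \<in> S"
  shows "(\<Sum>u\<in>S. real (card {j\<in>J. g j = u}) * h u) = (\<Sum>j\<in>J. h (g j))"
proof -
  have "(\<Sum>u\<in>S. real (card {j\<in>J. g j = u}) * h u) = (\<Sum>u\<in>S. \<Sum>j\<in>J. if g j = u then h u else 0)"
  proof (intro sum.cong refl)
    fix u
    have "real (card {j\<in>J. g j = u}) = (\<Sum>j\<in>J. if g j = u then 1 else 0)"
      using sum.inter_filter[OF assms(2), of "\<lambda>_. 1 :: real"] by simp
    hence "real (card {j\<in>J. g j = u}) * h u = (\<Sum>j\<in>J. (if g j = u then 1 else 0) * h u)"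
      by (simp add: sum_distrib_right)
    also have "\<dots> = (\<Sum>j\<in>J. if g j = u then h u else 0)" by (intro sum.cong) auto
    finally show "real (card {j\<in>J. g j = u}) * h u = (\<Sum>j\<in>J. if g j = u then h u else 0)" .
  qed
  also have "\<dots> = (\<Sum>j\<in>J. \<Sum>u\<in>S. if g j = u then h u else 0)" by (rule sum.swap)
  also have "\<dots> = (\<Sum>j\<in>J. h (g j))"
    using assms by (intro sum.cong refl) (simp add: sum.delta)
  finally show ?thesis .
qed

lemma is_rotation_mapD:
  assumes "is_rotation_map S d rot" "v \<in> S" "j < d"
  shows "fst (rot v j) \<in> S" "snd (rot v j) < d" "rot (fst (rot v j)) (snd (rot v j)) = (v, j)"
  using assms unfolding is_rotation_map_def by blast+

lemma card_rotation_edges_sym: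
  assumes R: "is_rotation_map S d rot" and u: "u \<in> S" and v: "v \<in> S"
  shows "card {j. j < d \<and> fst (rot v j) = u} = card {k. k < d \<and> fst (rot u k) = v}"
proof -
  have reverse_edge: "snd (rot u (snd (rot v j))) = j \<and> snd (rot v j) < d \<and> fst (rot u (snd (rot v j))) = v"
    if "v \<in> S" "j < d" "fst (rot v j) = u" for u v j
    using is_rotation_mapD[OF R that(1,2)] that(3) by simp
  show ?thesis
  proof (rule bij_betw_same_card[of "\<lambda>j. snd (rot v j)"],
      rule bij_betw_byWitness[of _ "\<lambda>k. snd (rot u k)"])
    show "\<forall>j\<in>{j. j < d \<and> fst (rot v j) = u}. snd (rot u (snd (rot v j))) = j"
      and "(\<lambda>j. snd (rot v j)) ` {j. j < d \<and> fst (rot v j) = u} \<subseteq> {k. k < d \<and> fst (rot u k) = v}"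
      using reverse_edge[OF v] by blast+
    show "\<forall>k\<in>{k. k < d \<and> fst (rot u k) = v}. snd (rot v (snd (rot u k))) = k"
      and "(\<lambda>k. snd (rot u k)) ` {k. k < d \<and> fst (rot u k) = v} \<subseteq> {j. j < d \<and> fst (rot v j) = u}"
      using reverse_edge[OF u] by blast+
  qed
qed

lemma norm_adj_sym:
  "is_rotation_map S d rot \<Longrightarrow> u \<in> S \<Longrightarrow> v \<in> S \<Longrightarrow> norm_adj d rot u v = norm_adj d rot v u"
  unfolding norm_adj_def using card_rotation_edges_sym[of S d rot u v] by simp

lemma norm_adj_nonneg: "0 \<le> norm_adj d rot u v"
  unfolding norm_adj_def by simp

lemma norm_adj_col_sum:
  assumes R: "is_rotation_map S d rot" and "finite S" and v: "v \<in> S"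
  shows "(\<Sum>u\<in>S. norm_adj d rot u v * h u) = (\<Sum>j<d. h (fst (rot v j))) / real d"
proof -
  have "(\<Sum>u\<in>S. norm_adj d rot u v * h u)
      = (\<Sum>u\<in>S. real (card {j\<in>{..<d}. fst (rot v j) = u}) * h u) / real d"
    unfolding norm_adj_def by (simp add: sum_divide_distrib)
  also have "\<dots> = (\<Sum>j<d. h (fst (rot v j))) / real d"
    using is_rotation_mapD(1)[OF R v] \<open>finite S\<close> by (subst sum_card_fiber) auto
  finally show ?thesis .
qed

lemma norm_adj_col_sum_1:
  "is_rotation_map S d rot \<Longrightarrow> finite S \<Longrightarrow> 1 \<le> d \<Longrightarrow> v \<in> S \<Longrightarrow> (\<Sum>u\<in>S. norm_adj d rot u v) = 1"
  using norm_adj_col_sum[of S d rot v "\<lambda>_. 1"] by simp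

lemma norm_adj_row_sum_1:
  assumes "is_rotation_map S d rot" "finite S" "1 \<le> d" "u \<in> S"
  shows "(\<Sum>v\<in>S. norm_adj d rot u v) = 1"
  using norm_adj_col_sum_1[OF assms] norm_adj_sym[OF assms(1) assms(4)] by simp

lemma mat_vec_on_norm_adj_const:
  assumes "is_rotation_map S d rot" "finite S" "1 \<le> d" "u \<in> S"
  shows "mat_vec_on S (norm_adj d rot) (\<lambda>b. c + w b) u = c + mat_vec_on S (norm_adj d rot) w u"
  using norm_adj_row_sum_1[OF assms]
  by (simp add: mat_vec_on_def algebra_simps sum.distrib flip: sum_distrib_left)

lemma sum_mat_vec_on_norm_adj:
  assumes "is_rotation_map S d rot" "finite S" "1 \<le> d"
  shows "(\<Sum>u\<in>S. mat_vec_on S (norm_adj d rot) w u) = (\<Sum>v\<in>S. w v)"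
proof -
  have "(\<Sum>u\<in>S. mat_vec_on S (norm_adj d rot) w u) = (\<Sum>v\<in>S. (\<Sum>u\<in>S. norm_adj d rot u v) * w v)"
    unfolding mat_vec_on_def by (subst sum.swap) (simp add: sum_distrib_right)
  thus ?thesis using norm_adj_col_sum_1[OF assms] by simp
qed

lemma weighted_mean_square_le:
  fixes p y :: "'b \<Rightarrow> real"
  assumes "finite B" and p: "\<And>b. b \<in> B \<Longrightarrow> 0 \<le> p b" and "(\<Sum>b\<in>B. p b) = 1"
  shows "(\<Sum>b\<in>B. p b * y b)^2 \<le> (\<Sum>b\<in>B. p b * (y b)^2)"
proof -
  define m where "m = (\<Sum>b\<in>B. p b * y b)"
  have "0 \<le> (\<Sum>b\<in>B. p b * (y b - m)^2)" using p by (intro sum_nonneg) auto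
  also have "\<dots> = (\<Sum>b\<in>B. p b * (y b)^2 - 2 * m * (p b * y b) + m^2 * p b)"
    by (intro sum.cong refl) (simp add: power2_diff algebra_simps)
  also have "\<dots> = (\<Sum>b\<in>B. p b * (y b)^2) - 2 * m * (\<Sum>b\<in>B. p b * y b) + m^2 * (\<Sum>b\<in>B. p b)"
    by (simp only: sum.distrib sum_subtractf sum_distrib_left)
  also have "\<dots> = (\<Sum>b\<in>B. p b * (y b)^2) - m^2" using assms(3) unfolding m_def by (simp add: power2_eq_square)
  finally show ?thesis unfolding m_def by simp
qed

lemma norm_adj_contraction:
  assumes R: "is_rotation_map S d rot" and S: "finite S" and d: "1 \<le> d"
  shows "dot_on S (mat_vec_on S (norm_adj d rot) y) (mat_vec_on S (norm_adj d rot) y) \<le> dot_on S y y"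
proof -
  have "dot_on S (mat_vec_on S (norm_adj d rot) y) (mat_vec_on S (norm_adj d rot) y)
      = (\<Sum>a\<in>S. (\<Sum>b\<in>S. norm_adj d rot a b * y b)^2)"
    unfolding dot_on_def mat_vec_on_def by (simp add: power2_eq_square)
  also have "\<dots> \<le> (\<Sum>a\<in>S. \<Sum>b\<in>S. norm_adj d rot a b * (y b)^2)"
  proof (rule sum_mono)
    fix a assume "a \<in> S"
    show "(\<Sum>b\<in>S. norm_adj d rot a b * y b)^2 \<le> (\<Sum>b\<in>S. norm_adj d rot a b * (y b)^2)"
      by (rule weighted_mean_square_le[OF S norm_adj_nonneg norm_adj_row_sum_1[OF R S d \<open>a \<in> S\<close>]])
  qed
  also have "\<dots> = (\<Sum>b\<in>S. (\<Sum>a\<in>S. norm_adj d rot a b) * (y b)^2)"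
    by (subst sum.swap) (simp add: sum_distrib_right)
  also have "\<dots> = dot_on S y y"
    unfolding dot_on_def using norm_adj_col_sum_1[OF R S d] by (simp add: power2_eq_square)
  finally show ?thesis .
qed

lemma norm_adj_sigma2:
  assumes R: "is_rotation_map S d rot" and S: "finite S" "S \<noteq> {}" and d: "1 \<le> d"
  shows "0 \<le> sigma2 S (norm_adj d rot)"
    and "dot_on S x (\<lambda>_. 1) = 0 \<Longrightarrow> dot_on S (mat_vec_on S (norm_adj d rot) x) (mat_vec_on S (norm_adj d rot) x)
      \<le> (sigma2 S (norm_adj d rot))^2 * dot_on S x x"
proof -
  obtain a where a: "a \<in> S" using S(2) by blast
  note bound = sigma2_bound_orthogonal[OF S(1) a, of "\<lambda>_. 1" "norm_adj d rot"]
  have top: "dot_on S (mat_vec_on S (norm_adj d rot) (\<lambda>_. 1)) (mat_vec_on S (norm_adj d rot) (\<lambda>_. 1))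
      = dot_on S (\<lambda>_. 1) (\<lambda>_. 1)"
    using norm_adj_row_sum_1[OF R S(1) d] by (intro dot_on_cong) (simp_all add: mat_vec_on_def)
  show "0 \<le> sigma2 S (norm_adj d rot)"
    by (rule bound(1)) (use norm_adj_contraction[OF R S(1) d] top in auto)
  show "dot_on S x (\<lambda>_. 1) = 0 \<Longrightarrow> dot_on S (mat_vec_on S (norm_adj d rot) x) (mat_vec_on S (norm_adj d rot) x)
      \<le> (sigma2 S (norm_adj d rot))^2 * dot_on S x x"
    by (rule bound(2)) (use norm_adj_contraction[OF R S(1) d] top in auto)
qed

lemma dot_on_mean_split:
  fixes w :: "'b \<Rightarrow> real"
  assumes "finite T" "T \<noteq> {}"
  defines "m \<equiv> (\<Sum>b\<in>T. w b) / real (card T)"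
  shows "(\<Sum>b\<in>T. w b - m) = 0"
    and "dot_on T w w = real (card T) * m^2 + dot_on T (\<lambda>b. w b - m) (\<lambda>b. w b - m)"
proof -
  have sum_w: "(\<Sum>b\<in>T. w b) = real (card T) * m" unfolding m_def using assms by simp
  show "(\<Sum>b\<in>T. w b - m) = 0" by (simp add: sum_subtractf sum_w)
  have "dot_on T (\<lambda>b. w b - m) (\<lambda>b. w b - m) = (\<Sum>b\<in>T. w b * w b - 2 * m * w b + m^2)"
    unfolding dot_on_def by (intro sum.cong refl) (simp add: algebra_simps power2_eq_square)
  also have "\<dots> = dot_on T w w - 2 * m * (\<Sum>b\<in>T. w b) + real (card T) * m^2"
    unfolding dot_on_def by (simp add: sum.distrib sum_subtractf sum_distrib_left)
  also have "\<dots> = dot_on T w w - real (card T) * m^2" unfolding sum_w by (simp add: power2_eq_square)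
  finally show "dot_on T w w = real (card T) * m^2 + dot_on T (\<lambda>b. w b - m) (\<lambda>b. w b - m)" by simp
qed

lemma norm_adj_mean_bound:
  fixes w :: "'a \<Rightarrow> real"
  assumes R: "is_rotation_map T d rot" and T: "finite T" "T \<noteq> {}" and d: "1 \<le> d"
  defines "m \<equiv> (\<Sum>b\<in>T. w b) / real (card T)"
  shows "dot_on T (mat_vec_on T (norm_adj d rot) w) (mat_vec_on T (norm_adj d rot) w)
    \<le> real (card T) * m^2 + (sigma2 T (norm_adj d rot))^2 * (dot_on T w w - real (card T) * m^2)"
proof -
  define A where "A = norm_adj d rot"
  define r where "r b = w b - m" for b
  have r0: "dot_on T r (\<lambda>_. 1) = 0"
    using dot_on_mean_split(1)[OF T, of w] unfolding r_def m_def dot_on_def by simp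
  have Ar0: "(\<Sum>a\<in>T. mat_vec_on T A r a) = 0"
    using sum_mat_vec_on_norm_adj[OF R T(1) d, of r] r0 unfolding A_def dot_on_def by simp
  have "mat_vec_on T A w a = m + mat_vec_on T A r a" if "a \<in> T" for a
    using mat_vec_on_norm_adj_const[OF R T(1) d that, of m r] unfolding r_def A_def by simp
  hence "dot_on T (mat_vec_on T A w) (mat_vec_on T A w)
      = dot_on T (\<lambda>a. m + mat_vec_on T A r a) (\<lambda>a. m + mat_vec_on T A r a)"
    by (intro dot_on_cong) auto
  also have "\<dots> = (\<Sum>a\<in>T. m^2 + 2 * m * mat_vec_on T A r a + mat_vec_on T A r a * mat_vec_on T A r a)"
    unfolding dot_on_def by (intro sum.cong refl) (simp add: algebra_simps power2_eq_square)
  also have "\<dots> = real (card T) * m^2 + 2 * m * (\<Sum>a\<in>T. mat_vec_on T A r a)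
      + dot_on T (mat_vec_on T A r) (mat_vec_on T A r)"
    unfolding dot_on_def by (simp add: sum.distrib sum_distrib_left)
  also have "\<dots> \<le> real (card T) * m^2 + (sigma2 T A)^2 * dot_on T r r"
    using norm_adj_sigma2(2)[OF R T d r0] Ar0 unfolding A_def by simp
  also have "dot_on T r r = dot_on T w w - real (card T) * m^2"
    using dot_on_mean_split(2)[OF T, of w] unfolding r_def m_def by simp
  finally show ?thesis unfolding A_def .
qed

section \<open>The rotation G_i on the product vertex set\<close>

lemma finite_tuples: "finite (tuples d1 s)"
  unfolding tuples_def using finite_lists_length_eq[of "{..<d1}" s] by (simp add: conj_commute)

lemma card_tuples: "card (tuples d1 s) = d1 ^ s"
  unfolding tuples_def using card_lists_length_eq[of "{..<d1}" s] by (simp add: conj_commute)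

lemma tuples_nonempty: "1 \<le> d1 \<Longrightarrow> tuples d1 s \<noteq> {}"
  unfolding tuples_def by (auto intro!: exI[of _ "replicate s 0"])

lemma tuples_Suc: "tuples d1 (Suc s) = (\<lambda>(j, b). j # b) ` ({..<d1} \<times> tuples d1 s)"
proof (rule Set.set_eqI)
  fix a
  show "a \<in> tuples d1 (Suc s) \<longleftrightarrow> a \<in> (\<lambda>(j, b). j # b) ` ({..<d1} \<times> tuples d1 s)"
  proof
    assume "a \<in> tuples d1 (Suc s)"
    then obtain j b where "a = j # b" "j < d1" "b \<in> tuples d1 s"
      unfolding tuples_def by (cases a) auto
    thus "a \<in> (\<lambda>(j, b). j # b) ` ({..<d1} \<times> tuples d1 s)" by force
  qed (auto simp: tuples_def)
qed

lemma sum_tuples_nth: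
  assumes "i < s"
  shows "(\<Sum>b\<in>tuples d1 s. f (b ! i)) = real (d1 ^ (s - 1)) * (\<Sum>j<d1. f j)"
  using assms
proof (induction s arbitrary: i)
  case (Suc s)
  have "inj_on (\<lambda>(j, b). j # b) ({..<d1} \<times> tuples d1 s)" by (auto simp: inj_on_def)
  hence "(\<Sum>b\<in>tuples d1 (Suc s). f (b ! i)) = (\<Sum>(j, b)\<in>{..<d1} \<times> tuples d1 s. f ((j # b) ! i))"
    unfolding tuples_Suc by (subst sum.reindex) (simp_all add: case_prod_beta)
  also have "\<dots> = (\<Sum>j<d1. \<Sum>b\<in>tuples d1 s. f ((j # b) ! i))"
    by (rule sum.cartesian_product[symmetric])
  also have "\<dots> = real (d1 ^ s) * (\<Sum>j<d1. f j)"
  proof (cases i)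
    case 0
    thus ?thesis by (simp add: card_tuples sum_distrib_left)
  next
    case (Suc i')
    hence "i' < s" using Suc.prems by simp
    hence "(\<Sum>b\<in>tuples d1 s. f ((j # b) ! i)) = real (d1 ^ (s - 1)) * (\<Sum>j<d1. f j)" for j
      using Suc.IH[of i'] \<open>i = Suc i'\<close> by simp
    moreover have "real d1 * real (d1 ^ (s - 1)) = real (d1 ^ s)"
      using \<open>i' < s\<close> by (metis Suc_diff_1 gr_implies_not_zero neq0_conv of_nat_mult power_Suc)
    ultimately show ?thesis by (simp add: mult.assoc[symmetric])
  qed
  finally show ?case by simp
qed simp

lemma Rot_i_eq: "Rot_i rotG i (v, a) = (fst (rotG v (a ! i)), a[i := snd (rotG v (a ! i))])"
  unfolding Rot_i_def by (simp add: case_prod_beta Let_def)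

context
  fixes n d1 s i :: nat and rotG :: "nat \<Rightarrow> nat \<Rightarrow> nat \<times> nat"
  assumes G: "is_rotation_map {..<n} d1 rotG" and i: "i < s"
begin

lemma Rot_i_mem:
  assumes "p \<in> {..<n} \<times> tuples d1 s"
  shows "Rot_i rotG i p \<in> {..<n} \<times> tuples d1 s"
proof -
  obtain v a where p: "p = (v, a)" "v < n" "length a = s" "set a \<subseteq> {..<d1}"
    using assms unfolding tuples_def by auto
  have ai: "a ! i < d1" using p i by (meson lessThan_iff nth_mem subsetD)
  have "set (a[i := snd (rotG v (a ! i))]) \<subseteq> {..<d1}"
    using set_update_subset_insert[of a i] p is_rotation_mapD(2)[OF G _ ai] by auto
  thus ?thesis unfolding p Rot_i_eq tuples_def using p is_rotation_mapD(1)[OF G _ ai] by auto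
qed

lemma Rot_i_involution:
  assumes "p \<in> {..<n} \<times> tuples d1 s"
  shows "Rot_i rotG i (Rot_i rotG i p) = p"
proof -
  obtain v a where p: "p = (v, a)" "v < n" "length a = s" "set a \<subseteq> {..<d1}"
    using assms unfolding tuples_def by auto
  have ai: "a ! i < d1" using p i by (meson lessThan_iff nth_mem subsetD)
  show ?thesis unfolding p Rot_i_eq using is_rotation_mapD(3)[OF G _ ai] p i by simp
qed

lemma bij_betw_Rot_i: "bij_betw (Rot_i rotG i) ({..<n} \<times> tuples d1 s) ({..<n} \<times> tuples d1 s)"
  by (rule bij_betw_byWitness[of _ "Rot_i rotG i"]) (use Rot_i_involution Rot_i_mem in blast)+

lemma mat_vec_on_perm_mat_Rot:
  assumes p: "p \<in> {..<n} \<times> tuples d1 s"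
  shows "mat_vec_on ({..<n} \<times> tuples d1 s) (perm_mat_Rot rotG i) w p = w (Rot_i rotG i p)"
proof -
  have "mat_vec_on ({..<n} \<times> tuples d1 s) (perm_mat_Rot rotG i) w p
      = (\<Sum>q\<in>{..<n} \<times> tuples d1 s. if q = Rot_i rotG i p then w q else 0)"
    unfolding mat_vec_on_def perm_mat_Rot_def
  proof (intro sum.cong refl)
    fix q assume "q \<in> {..<n} \<times> tuples d1 s"
    hence "p = Rot_i rotG i q \<longleftrightarrow> q = Rot_i rotG i p"
      using p Rot_i_involution by metis
    thus "(if p = Rot_i rotG i q then 1 else 0) * w q = (if q = Rot_i rotG i p then w q else 0)" by simp
  qed
  also have "\<dots> = w (Rot_i rotG i p)"
    using Rot_i_mem[OF p] finite_tuples by (simp add: sum.delta')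
  finally show ?thesis .
qed

lemma perm_mat_Rot_isometry:
  "dot_on ({..<n} \<times> tuples d1 s) (mat_vec_on ({..<n} \<times> tuples d1 s) (perm_mat_Rot rotG i) w)
     (mat_vec_on ({..<n} \<times> tuples d1 s) (perm_mat_Rot rotG i) w)
   = dot_on ({..<n} \<times> tuples d1 s) w w"
proof -
  have "dot_on ({..<n} \<times> tuples d1 s) (mat_vec_on ({..<n} \<times> tuples d1 s) (perm_mat_Rot rotG i) w)
      (mat_vec_on ({..<n} \<times> tuples d1 s) (perm_mat_Rot rotG i) w)
      = (\<Sum>p\<in>{..<n} \<times> tuples d1 s. w (Rot_i rotG i p) * w (Rot_i rotG i p))"
    unfolding dot_on_def by (intro sum.cong) (auto simp: mat_vec_on_perm_mat_Rot)
  also have "\<dots> = dot_on ({..<n} \<times> tuples d1 s) w w"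
    unfolding dot_on_def by (rule sum.reindex_bij_betw[OF bij_betw_Rot_i])
  finally show ?thesis .
qed

end

lemma mat_vec_on_id_tensor:
  assumes "v \<in> V" "finite V"
  shows "mat_vec_on (V \<times> T) (id_tensor A) z (v, a) = mat_vec_on T A (\<lambda>b. z (v, b)) a"
proof -
  have "mat_vec_on (V \<times> T) (id_tensor A) z (v, a)
      = (\<Sum>w\<in>V. \<Sum>b\<in>T. (if v = w then 1 else 0) * A a b * z (w, b))"
    unfolding mat_vec_on_def id_tensor_def by (simp add: sum.cartesian_product case_prod_unfold)
  also have "\<dots> = (\<Sum>w\<in>V. if w = v then (\<Sum>b\<in>T. A a b * z (v, b)) else 0)"
    by (intro sum.cong) auto
  finally show ?thesis using assms unfolding mat_vec_on_def by (simp add: sum.delta)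
qed

lemma dot_on_id_tensor:
  assumes "finite V"
  shows "dot_on (V \<times> T) (mat_vec_on (V \<times> T) (id_tensor A) z) (mat_vec_on (V \<times> T) (id_tensor A) z)
    = (\<Sum>v\<in>V. dot_on T (mat_vec_on T A (\<lambda>b. z (v, b))) (mat_vec_on T A (\<lambda>b. z (v, b))))"
  unfolding dot_on_Times
  by (intro sum.cong refl dot_on_cong) (simp_all add: mat_vec_on_id_tensor[OF _ assms])

definition slice_mean :: "'b set \<Rightarrow> ('a \<times> 'b \<Rightarrow> real) \<Rightarrow> 'a \<Rightarrow> real" where
  "slice_mean T x v = (\<Sum>b\<in>T. x (v, b)) / real (card T)"

lemma sum_slice_deviation:
  "finite T \<Longrightarrow> T \<noteq> {} \<Longrightarrow> (\<Sum>b\<in>T. x (v, b) - slice_mean T x v) = 0"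
  unfolding slice_mean_def by (rule dot_on_mean_split(1))

lemma dot_on_slice_mean_split:
  assumes "finite T" "T \<noteq> {}"
  shows "dot_on (V \<times> T) x x
    = dot_on (V \<times> T) (\<lambda>q. slice_mean T x (fst q)) (\<lambda>q. slice_mean T x (fst q))
      + dot_on (V \<times> T) (\<lambda>q. x q - slice_mean T x (fst q)) (\<lambda>q. x q - slice_mean T x (fst q))"
proof -
  have "dot_on T (\<lambda>b. x (v, b)) (\<lambda>b. x (v, b))
      = dot_on T (\<lambda>_. slice_mean T x v) (\<lambda>_. slice_mean T x v)
        + dot_on T (\<lambda>b. x (v, b) - slice_mean T x v) (\<lambda>b. x (v, b) - slice_mean T x v)" for v
    using dot_on_mean_split(2)[OF assms, of "\<lambda>b. x (v, b)"] unfolding slice_mean_def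
    by (simp add: dot_on_def[of T "\<lambda>_. _"] power2_eq_square)
  thus ?thesis unfolding dot_on_Times by (simp add: sum.distrib)
qed

lemma dot_on_slice_mean_one:
  "dot_on V (slice_mean T x) (\<lambda>_. 1) = dot_on (V \<times> T) x (\<lambda>_. 1) / real (card T)"
  unfolding slice_mean_def dot_on_Times by (simp add: dot_on_def sum_divide_distrib)

locale rotation_product =
  fixes n d1 d2 s i :: nat
    and rotG :: "nat \<Rightarrow> nat \<Rightarrow> nat \<times> nat"
    and rotH :: "nat list \<Rightarrow> nat \<Rightarrow> nat list \<times> nat"
  assumes d1: "1 \<le> d1" and d2: "1 \<le> d2"
    and G: "is_rotation_map {..<n} d1 rotG"
    and H: "is_rotation_map (tuples d1 s) d2 rotH"
    and i: "i < s"
begin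

abbreviation "T \<equiv> tuples d1 s"
abbreviation "VT \<equiv> {..<n} \<times> T"
abbreviation "A\<^sub>G \<equiv> norm_adj d1 rotG"
abbreviation "A\<^sub>H \<equiv> norm_adj d2 rotH"
abbreviation "\<sigma>\<^sub>H \<equiv> sigma2 T A\<^sub>H"
abbreviation "X \<equiv> id_tensor A\<^sub>H"
abbreviation "P \<equiv> perm_mat_Rot rotG i"
abbreviation "M \<equiv> mat_mult_on VT (mat_mult_on VT X P) X"

lemma tuples_finite_nonempty: "finite T" "T \<noteq> {}"
  using finite_tuples tuples_nonempty[OF d1] by blast+

lemma id_tensor_contraction: "dot_on VT (mat_vec_on VT X z) (mat_vec_on VT X z) \<le> dot_on VT z z"
proof -
  have "dot_on VT (mat_vec_on VT X z) (mat_vec_on VT X z) \<le> (\<Sum>v<n. dot_on T (\<lambda>b. z (v, b)) (\<lambda>b. z (v, b)))"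
    unfolding dot_on_id_tensor[OF finite_lessThan] by (intro sum_mono norm_adj_contraction[OF H tuples_finite_nonempty(1) d2])
  thus ?thesis by (simp add: dot_on_Times)
qed

lemma id_tensor_slice_mean_zero:
  assumes "\<And>v. v < n \<Longrightarrow> (\<Sum>b\<in>T. z (v, b)) = 0"
  shows "dot_on VT (mat_vec_on VT X z) (mat_vec_on VT X z) \<le> \<sigma>\<^sub>H^2 * dot_on VT z z"
proof -
  have "dot_on VT (mat_vec_on VT X z) (mat_vec_on VT X z) \<le> (\<Sum>v<n. \<sigma>\<^sub>H^2 * dot_on T (\<lambda>b. z (v, b)) (\<lambda>b. z (v, b)))"
    unfolding dot_on_id_tensor[OF finite_lessThan]
    using assms by (intro sum_mono norm_adj_sigma2(2)[OF H tuples_finite_nonempty d2]) (simp add: dot_on_def)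
  thus ?thesis by (simp add: dot_on_Times sum_distrib_left)
qed

lemma id_tensor_slice_constant:
  assumes "p \<in> VT"
  shows "mat_vec_on VT X (\<lambda>q. y (fst q)) p = y (fst p)"
proof -
  obtain v a where p: "p = (v, a)" "v < n" "a \<in> T" using assms by auto
  have "mat_vec_on VT X (\<lambda>q. y (fst q)) p = mat_vec_on T A\<^sub>H (\<lambda>_. y v) a"
    unfolding p(1) using p(2) by (simp add: mat_vec_on_id_tensor)
  also have "\<dots> = y v"
    using norm_adj_row_sum_1[OF H tuples_finite_nonempty(1) d2 p(3)]
    by (simp add: mat_vec_on_def flip: sum_distrib_right)
  finally show ?thesis using p(1) by simp
qed

text \<open>The i-th coordinate of a uniform tuple is a uniform edge label, so averaging a rotated
  function of the G-vertex over the tuples is one step of the walk on G.\<close>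

lemma slice_mean_perm_mat_Rot:
  assumes v: "v < n"
  shows "slice_mean T (mat_vec_on VT P (\<lambda>q. y (fst q))) v = mat_vec_on {..<n} A\<^sub>G y v"
proof -
  have "(\<Sum>b\<in>T. mat_vec_on VT P (\<lambda>q. y (fst q)) (v, b)) = (\<Sum>b\<in>T. y (fst (rotG v (b ! i))))"
    using v by (intro sum.cong) (auto simp: mat_vec_on_perm_mat_Rot[OF G i] Rot_i_eq)
  also have "\<dots> = real (d1 ^ (s - 1)) * (\<Sum>j<d1. y (fst (rotG v j)))" by (rule sum_tuples_nth[OF i])
  moreover have "real (card T) = real d1 * real (d1 ^ (s - 1))"
    using i by (simp add: card_tuples power_Suc[symmetric] del: power_Suc)
  ultimately have "slice_mean T (mat_vec_on VT P (\<lambda>q. y (fst q))) v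
      = (\<Sum>j<d1. y (fst (rotG v j))) / real d1"
    using d1 by (simp add: slice_mean_def)
  also have "\<dots> = (\<Sum>u<n. A\<^sub>G u v * y u)"
    using norm_adj_col_sum[OF G finite_lessThan, of v y] v by simp
  also have "\<dots> = mat_vec_on {..<n} A\<^sub>G y v"
    unfolding mat_vec_on_def using norm_adj_sym[OF G] v by (intro sum.cong) (auto simp: mult.commute)
  finally show ?thesis .
qed

text \<open>For the slice-wise constant part of a vector, the slice means after the rotation form one
  step of the walk on G; this is where the hypothesis on sigma2 of G enters.\<close>

lemma slice_constant_part_bound:
  assumes hyp: "sigma2 {..<n} A\<^sub>G \<le> \<sigma>\<^sub>H" and y: "dot_on {..<n} y (\<lambda>_. 1) = 0"
  shows "dot_on VT (mat_vec_on VT X (mat_vec_on VT P (\<lambda>q. y (fst q))))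
      (mat_vec_on VT X (mat_vec_on VT P (\<lambda>q. y (fst q))))
    \<le> 2 * \<sigma>\<^sub>H^2 * dot_on VT (\<lambda>q. y (fst q)) (\<lambda>q. y (fst q))"
proof (cases "n = 0")
  case True
  thus ?thesis by (simp add: dot_on_def)
next
  case False
  hence Vn: "finite {..<n}" "{..<n} \<noteq> {}" by auto
  define z where "z = mat_vec_on VT P (\<lambda>q. y (fst q))"
  define m where "m = slice_mean T z"
  have lift_norm: "dot_on VT (\<lambda>q. y (fst q)) (\<lambda>q. y (fst q)) = real (card T) * dot_on {..<n} y y"
    unfolding dot_on_Times by (simp add: dot_on_def sum_distrib_left)
  have "(sigma2 {..<n} A\<^sub>G)^2 \<le> \<sigma>\<^sub>H^2"
    using norm_adj_sigma2(1)[OF G Vn d1] hyp by (intro power_mono) auto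
  hence walk: "dot_on {..<n} (mat_vec_on {..<n} A\<^sub>G y) (mat_vec_on {..<n} A\<^sub>G y) \<le> \<sigma>\<^sub>H^2 * dot_on {..<n} y y"
    using norm_adj_sigma2(2)[OF G Vn d1 y] dot_on_self_nonneg[of "{..<n}" y]
    by (meson mult_right_mono order.trans)
  have "dot_on VT (mat_vec_on VT X z) (mat_vec_on VT X z)
      \<le> (\<Sum>v<n. real (card T) * (m v)^2
            + \<sigma>\<^sub>H^2 * (dot_on T (\<lambda>b. z (v, b)) (\<lambda>b. z (v, b)) - real (card T) * (m v)^2))"
    unfolding dot_on_id_tensor[OF finite_lessThan] m_def slice_mean_def
    by (intro sum_mono norm_adj_mean_bound[OF H tuples_finite_nonempty d2])
  also have "\<dots> \<le> (\<Sum>v<n. real (card T) * (m v)^2 + \<sigma>\<^sub>H^2 * dot_on T (\<lambda>b. z (v, b)) (\<lambda>b. z (v, b)))"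
    by (intro sum_mono) (simp add: right_diff_distrib)
  also have "\<dots> = real (card T) * dot_on {..<n} (mat_vec_on {..<n} A\<^sub>G y) (mat_vec_on {..<n} A\<^sub>G y)
      + \<sigma>\<^sub>H^2 * dot_on VT z z"
  proof -
    have "(\<Sum>v<n. (m v)^2) = dot_on {..<n} (mat_vec_on {..<n} A\<^sub>G y) (mat_vec_on {..<n} A\<^sub>G y)"
      unfolding dot_on_def m_def z_def using slice_mean_perm_mat_Rot by (simp add: power2_eq_square)
    thus ?thesis unfolding dot_on_Times[of "{..<n}"] by (simp add: sum.distrib flip: sum_distrib_left)
  qed
  also have "dot_on VT z z = dot_on VT (\<lambda>q. y (fst q)) (\<lambda>q. y (fst q))"
    unfolding z_def by (rule perm_mat_Rot_isometry[OF G i])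
  finally show ?thesis
    using mult_left_mono[OF walk, of "real (card T)"] unfolding z_def lift_norm by (simp add: algebra_simps)
qed

lemma zigzag_split:
  "mat_vec_on VT M x = (\<lambda>p. mat_vec_on VT X (mat_vec_on VT P (\<lambda>q. y (fst q))) p
     + mat_vec_on VT X (mat_vec_on VT P (mat_vec_on VT X (\<lambda>q. x q - y (fst q)))) p)"
proof -
  have "mat_vec_on VT X x p = y (fst p) + mat_vec_on VT X (\<lambda>q. x q - y (fst q)) p" if "p \<in> VT" for p
  proof -
    have "mat_vec_on VT X x = mat_vec_on VT X (\<lambda>q. y (fst q) + (x q - y (fst q)))" by simp
    thus ?thesis using id_tensor_slice_constant[OF that] unfolding mat_vec_on_add by simp
  qed
  hence "mat_vec_on VT P (mat_vec_on VT X x)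
      = mat_vec_on VT P (\<lambda>p. y (fst p) + mat_vec_on VT X (\<lambda>q. x q - y (fst q)) p)"
    by (rule mat_vec_on_cong)
  thus ?thesis by (simp add: mat_vec_on_mat_mult_on mat_vec_on_add)
qed

lemma zigzag_bound:
  assumes hyp: "sigma2 {..<n} A\<^sub>G \<le> \<sigma>\<^sub>H" and x: "dot_on VT x (\<lambda>_. 1) = 0"
  shows "dot_on VT (mat_vec_on VT M x) (mat_vec_on VT M x) \<le> 4 * \<sigma>\<^sub>H^2 * dot_on VT x x"
proof -
  define y where "y = slice_mean T x"
  define x2 where "x2 q = x q - y (fst q)" for q
  have norm_split: "dot_on VT x x = dot_on VT (\<lambda>q. y (fst q)) (\<lambda>q. y (fst q)) + dot_on VT x2 x2"
    unfolding y_def x2_def by (rule dot_on_slice_mean_split[OF tuples_finite_nonempty])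
  have "dot_on {..<n} y (\<lambda>_. 1) = 0" using x unfolding y_def dot_on_slice_mean_one by simp
  hence "dot_on VT (mat_vec_on VT X (mat_vec_on VT P (\<lambda>q. y (fst q))))
      (mat_vec_on VT X (mat_vec_on VT P (\<lambda>q. y (fst q)))) \<le> 2 * \<sigma>\<^sub>H^2 * dot_on VT (\<lambda>q. y (fst q)) (\<lambda>q. y (fst q))"
    by (rule slice_constant_part_bound[OF hyp])
  moreover have "dot_on VT (mat_vec_on VT X (mat_vec_on VT P (mat_vec_on VT X x2)))
      (mat_vec_on VT X (mat_vec_on VT P (mat_vec_on VT X x2))) \<le> \<sigma>\<^sub>H^2 * dot_on VT x2 x2"
  proof -
    have "(\<Sum>b\<in>T. x2 (v, b)) = 0" for v
      using sum_slice_deviation[OF tuples_finite_nonempty, of x v] unfolding x2_def y_def by simp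
    thus ?thesis
      using id_tensor_contraction[of "mat_vec_on VT P (mat_vec_on VT X x2)"]
        perm_mat_Rot_isometry[OF G i, of "mat_vec_on VT X x2"] id_tensor_slice_mean_zero
      by fastforce
  qed
  moreover have "dot_on VT (mat_vec_on VT M x) (mat_vec_on VT M x)
    \<le> 2 * dot_on VT (mat_vec_on VT X (mat_vec_on VT P (\<lambda>q. y (fst q))))
          (mat_vec_on VT X (mat_vec_on VT P (\<lambda>q. y (fst q))))
      + 2 * dot_on VT (mat_vec_on VT X (mat_vec_on VT P (mat_vec_on VT X x2)))
          (mat_vec_on VT X (mat_vec_on VT P (mat_vec_on VT X x2)))"
    unfolding zigzag_split[of x y] x2_def by (rule dot_on_add_self_le)
  moreover have "0 \<le> \<sigma>\<^sub>H^2 * dot_on VT x2 x2" by (simp add: dot_on_self_nonneg)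
  ultimately show ?thesis unfolding norm_split by (simp add: algebra_simps)
qed

end

theorem mainTheorem9:
  fixes n d1 d2 s :: nat
    and rotG :: "nat \<Rightarrow> nat \<Rightarrow> nat \<times> nat"
    and rotH :: "nat list \<Rightarrow> nat \<Rightarrow> nat list \<times> nat"
  assumes "d1 \<ge> 1" and "d2 \<ge> 1"
    and G: "is_rotation_map {..<n} d1 rotG" "locally_invertible {..<n} d1 rotG"
    and H: "is_rotation_map (tuples d1 s) d2 rotH"
    and hyp: "sigma2 {..<n} (norm_adj d1 rotG) \<le> sigma2 (tuples d1 s) (norm_adj d2 rotH)"
    and i: "i < s"
  shows "sigma2 ({..<n} \<times> tuples d1 s)
           (mat_mult_on ({..<n} \<times> tuples d1 s)
              (mat_mult_on ({..<n} \<times> tuples d1 s) (id_tensor (norm_adj d2 rotH)) (perm_mat_Rot rotG i))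
              (id_tensor (norm_adj d2 rotH)))
         \<le> 2 * sigma2 (tuples d1 s) (norm_adj d2 rotH)"
proof -
  interpret rotation_product n d1 d2 s i rotG rotH by unfold_locales fact+
  let ?\<sigma> = "sigma2 (tuples d1 s) (norm_adj d2 rotH)"
  have "0 \<le> ?\<sigma>" by (rule norm_adj_sigma2(1)[OF H tuples_finite_nonempty d2])
  have "sigma2 ({..<n} \<times> tuples d1 s)
           (mat_mult_on ({..<n} \<times> tuples d1 s)
              (mat_mult_on ({..<n} \<times> tuples d1 s) (id_tensor (norm_adj d2 rotH)) (perm_mat_Rot rotG i))
              (id_tensor (norm_adj d2 rotH)))
        \<le> sqrt (4 * ?\<sigma>^2)"
    using zigzag_bound[OF hyp]
    by (intro sigma2_le_sqrt[where u = "\<lambda>_. 1"]) (simp_all add: finite_tuples)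
  also have "sqrt (4 * ?\<sigma>^2) = 2 * ?\<sigma>" using \<open>0 \<le> ?\<sigma>\<close> by (simp add: real_sqrt_mult)
  finally show ?thesis .
qed

end
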